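(* Let $\mathcal{H}$ be a complex Hilbert space of finite dimension $n\ge2$, $m\ge2$, $\sigma$ a self-adjoint operator on $\mathcal{H}$, and $\rho$ a density operator on $\mathcal{H}^{\otimes m}$. (a) If $\rho$ is $\sigma$SMC then $\rho$ is $\sigma$EC; the converse is not true in general. (b) If $\sigma$ has nondegenerate spectrum and $\rho$ is $\sigma$SMC, then $\rho$ is RSC; the converse is not true in general. (c) If $\sigma$ has nondegenerate spectrum and $\rho$ is $\sigma$SMC, then $\rho$ is SSC; the converse is not true in general.
   Context: For $X$ an operator on $\mathcal{H}$, $X^{(i)}=I^{\otimes(i-1)}\otimes X\otimes I^{\otimes(m-i)}$. For a permutation $\pi$ of $\{1,\dots,m\}$, $U_\pi$ is the unitary on $\mathcal{H}^{\otimes m}$ with $U_\pi(X_1\otimes\cdots\otimes X_m)U_\pi^\dagger=X_{\pi(1)}\otimes\cdots\otimes X_{\pi(m)}$. Definitions: $\rho$ is $\sigma$EC ($\sigma$-expectation consensus) if $\mathrm{Tr}(\sigma^{(1)}\rho)=\cdots=\mathrm{Tr}(\sigma^{(m)}\rho)$; $\rho$ is RSC (reduced state consensus) if the reduced states $\bar\rho_k=\mathrm{Tr}_{\bigotimes_{j\ne k}\mathcal{H}_j}(\rho)$ are all equal; $\rho$ is SSC (symmetric state consensus) if $U_\pi\rho U_\pi^\dagger=\rho$ for all $\pi$; writing $\sigma=\sum_j s_j\Pi_j$ with distinct $s_j$ and spectral projectors $\Pi_j$, $\rho$ is $\sigma$SMC (single $\sigma$-measurement consensus) if $\mathrm{Tr}(\Pi_j^{(k)}\Pi_j^{(\ell)}\rho)=\mathrm{Tr}(\Pi_j^{(\ell)}\rho)$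 for all $k,\ell$ and all $j$. "Not true in general" means there exist $m,n,\sigma$ and states for which the converse implication fails. *)

theory Defs
  imports "Jordan_Normal_Form.Schur_Decomposition" "HOL-Combinatorics.Permutations"
begin

text \<open>Model: H = C^n with computational basis indexed by 0..<n; H^{tensor m} = C^(n^m),
  basis index a < n^m encodes the tuple (dig n 0 a, ..., dig n (m-1) a); tensor factors
  are numbered 0..<m (factor k here is factor k+1 of the paper).\<close>

definition dig :: "nat \<Rightarrow> nat \<Rightarrow> nat \<Rightarrow> nat" where
  "dig n k a = (a div n ^ k) mod n"

definition mtrace :: "complex mat \<Rightarrow> complex" where
  "mtrace A = (\<Sum>i<dim_row A. A $$ (i, i))"

text \<open>X^(k) = I \<otimes> ... \<otimes> X \<otimes> ... \<otimes> I (X in factor k).\<close>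
definition emb :: "nat \<Rightarrow> nat \<Rightarrow> nat \<Rightarrow> complex mat \<Rightarrow> complex mat" where
  "emb n m k X = mat (n ^ m) (n ^ m) (\<lambda>(a, b).
     if (\<forall>j<m. j \<noteq> k \<longrightarrow> dig n j a = dig n j b) then X $$ (dig n k a, dig n k b) else 0)"

definition ptrace :: "nat \<Rightarrow> nat \<Rightarrow> nat \<Rightarrow> complex mat \<Rightarrow> complex mat" where
  "ptrace n m k \<rho> = mat n n (\<lambda>(x, y).
     \<Sum>a<n ^ m. \<Sum>b<n ^ m.
       if dig n k a = x \<and> dig n k b = y \<and> (\<forall>j<m. j \<noteq> k \<longrightarrow> dig n j a = dig n j b)
       then \<rho> $$ (a, b) else 0)"

definition perm_idx :: "nat \<Rightarrow> nat \<Rightarrow> (nat \<Rightarrow> nat) \<Rightarrow> nat \<Rightarrow> nat" where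
  "perm_idx n m \<tau> a = (\<Sum>j<m. dig n (\<tau> j) a * n ^ j)"

text \<open>perm_conj n m \<pi> \<rho> = U_\<pi> \<rho> U_\<pi>^dagger, where U_\<pi>(X_1 \<otimes>...\<otimes> X_m)U_\<pi>^dagger
  = X_\<pi>(1) \<otimes> ... \<otimes> X_\<pi>(m).\<close>
definition perm_conj :: "nat \<Rightarrow> nat \<Rightarrow> (nat \<Rightarrow> nat) \<Rightarrow> complex mat \<Rightarrow> complex mat" where
  "perm_conj n m \<pi> \<rho> = mat (n ^ m) (n ^ m) (\<lambda>(a, b).
     \<rho> $$ (perm_idx n m (inv_into UNIV \<pi>) a, perm_idx n m (inv_into UNIV \<pi>) b))"

definition self_adjoint :: "nat \<Rightarrow> complex mat \<Rightarrow> bool" where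
  "self_adjoint d A \<longleftrightarrow> A \<in> carrier_mat d d \<and> mat_adjoint A = A"

definition density_op :: "nat \<Rightarrow> complex mat \<Rightarrow> bool" where
  "density_op d \<rho> \<longleftrightarrow> self_adjoint d \<rho> \<and> mtrace \<rho> = 1 \<and>
     (\<forall>v \<in> carrier_vec d. Im (conjugate v \<bullet> (\<rho> *\<^sub>v v)) = 0 \<and> Re (conjugate v \<bullet> (\<rho> *\<^sub>v v)) \<ge> 0)"

definition is_eigenvalue :: "nat \<Rightarrow> complex mat \<Rightarrow> complex \<Rightarrow> bool" where
  "is_eigenvalue d A s \<longleftrightarrow> (\<exists>v \<in> carrier_vec d. v \<noteq> 0\<^sub>v d \<and> A *\<^sub>v v = s \<cdot>\<^sub>v v)"

definition spectral_proj :: "nat \<Rightarrow> complex mat \<Rightarrow> complex \<Rightarrow> complex mat \<Rightarrow> bool" where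
  "spectral_proj d \<sigma> s P \<longleftrightarrow> is_eigenvalue d \<sigma> s \<and> self_adjoint d P \<and> P * P = P \<and>
     (\<forall>v \<in> carrier_vec d. P *\<^sub>v v = v \<longleftrightarrow> \<sigma> *\<^sub>v v = s \<cdot>\<^sub>v v)"

definition nondegenerate :: "nat \<Rightarrow> complex mat \<Rightarrow> bool" where
  "nondegenerate d \<sigma> \<longleftrightarrow> card {s. is_eigenvalue d \<sigma> s} = d"

definition setting :: "nat \<Rightarrow> nat \<Rightarrow> complex mat \<Rightarrow> complex mat \<Rightarrow> bool" where
  "setting n m \<sigma> \<rho> \<longleftrightarrow> n \<ge> 2 \<and> m \<ge> 2 \<and> self_adjoint n \<sigma> \<and> density_op (n ^ m) \<rho>"

definition EC :: "nat \<Rightarrow> nat \<Rightarrow> complex mat \<Rightarrow> complex mat \<Rightarrow> bool" where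
  "EC n m \<sigma> \<rho> \<longleftrightarrow> (\<forall>k<m. \<forall>l<m. mtrace (emb n m k \<sigma> * \<rho>) = mtrace (emb n m l \<sigma> * \<rho>))"

definition RSC :: "nat \<Rightarrow> nat \<Rightarrow> complex mat \<Rightarrow> bool" where
  "RSC n m \<rho> \<longleftrightarrow> (\<forall>k<m. \<forall>l<m. ptrace n m k \<rho> = ptrace n m l \<rho>)"

definition SSC :: "nat \<Rightarrow> nat \<Rightarrow> complex mat \<Rightarrow> bool" where
  "SSC n m \<rho> \<longleftrightarrow> (\<forall>\<pi>. \<pi> permutes {..<m} \<longrightarrow> perm_conj n m \<pi> \<rho> = \<rho>)"

definition SMC :: "nat \<Rightarrow> nat \<Rightarrow> complex mat \<Rightarrow> complex mat \<Rightarrow> bool" where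
  "SMC n m \<sigma> \<rho> \<longleftrightarrow> (\<forall>s P. spectral_proj n \<sigma> s P \<longrightarrow>
     (\<forall>k<m. \<forall>l<m. mtrace (emb n m k P * emb n m l P * \<rho>) = mtrace (emb n m l P * \<rho>)))"

end

theory Submission
  imports Defs "Jordan_Normal_Form.Jordan_Normal_Form_Uniqueness"
    "Jordan_Normal_Form.Jordan_Normal_Form_Existence"
begin

text \<open>
  A Hermitian \<sigma> has a diagonal Jordan normal form, which yields spectral projectors \<Pi>_j
  with \<Sum>_j \<Pi>_j = 1 and \<Sum>_j s_j \<Pi>_j = \<sigma>.

  (a) Since \<Pi>^(k) and \<Pi>^(l) commute, \<sigma>SMC gives
  tr(\<Pi>^(k) \<rho>) = tr(\<Pi>^(l) \<Pi>^(k) \<rho>) = tr(\<Pi>^(l) \<rho>), and \<sigma>EC follows by linearity.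

  (c) For k \<noteq> l the operator (1 - \<Pi>)^(k) \<Pi>^(l) is an orthogonal projector whose expectation
  in \<rho> vanishes by \<sigma>SMC, so it annihilates the positive semidefinite \<rho>; summing over j gives
  \<rho> = \<Sum>_j \<Pi>_j^(k) \<Pi>_j^(l) \<rho>. For nondegenerate \<sigma> every \<Pi>_j has rank one, and then
  U_(k l) \<Pi>_j^(k) \<Pi>_j^(l) = \<Pi>_j^(k) \<Pi>_j^(l) for the transposition (k l). Hence
  U_(k l) \<rho> = \<rho> = \<rho> U_(k l), and transpositions generate all permutations.

  (b) Conjugation by U_(k l) exchanges the reduced states on the factors k and l, so
  SSC implies RSC.

  For the converses, take the maximally mixed two-qubit state \<rho> = I/4 and \<sigma> = |1><1|:
  \<rho> is \<sigma>EC, SSC and RSC, but tr(\<sigma>^(1) \<sigma>^(2) \<rho>) = 1/4 differs from tr(\<sigma>^(2) \<rho>) = 1/2.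
\<close>

section \<open>Digits of basis indices\<close>

lemma dig_less: "0 < n \<Longrightarrow> dig n k a < n"
  by (simp add: dig_def)

lemma dig_0: "dig n 0 a = a mod n"
  by (simp add: dig_def)

lemma dig_Suc: "dig n (Suc k) a = dig n k (a div n)"
  by (simp add: dig_def div_mult2_eq mult.commute)

lemma dig_inject:
  assumes "a < n ^ m" "b < n ^ m" "\<forall>j<m. dig n j a = dig n j b"
  shows "a = b"
  using assms
proof (induction m arbitrary: a b)
  case 0
  then show ?case by simp
next
  case (Suc m)
  have "a div n < n ^ m" "b div n < n ^ m"
    using Suc.prems(1,2) by (simp_all add: less_mult_imp_div_less mult.commute)
  moreover have "\<forall>j<m. dig n j (a div n) = dig n j (b div n)"
    using Suc.prems(3) by (metis Suc_mono dig_Suc)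
  ultimately have "a div n = b div n"
    using Suc.IH by blast
  moreover have "a mod n = b mod n"
    using Suc.prems(3) by (metis dig_0 zero_less_Suc)
  ultimately show ?case
    by (metis div_mult_mod_eq)
qed

definition from_digits :: "nat \<Rightarrow> nat \<Rightarrow> (nat \<Rightarrow> nat) \<Rightarrow> nat" where
  "from_digits n m d = (\<Sum>j<m. d j * n ^ j)"

lemma from_digits_Suc: "from_digits n (Suc m) d = d 0 + n * from_digits n m (\<lambda>j. d (Suc j))"
proof -
  have "(\<Sum>j<m. d (Suc j) * n ^ Suc j) = n * (\<Sum>j<m. d (Suc j) * n ^ j)"
    by (simp add: sum_distrib_left algebra_simps)
  then show ?thesis
    unfolding from_digits_def sum.lessThan_Suc_shift by simp
qed

lemma from_digits_less: "\<forall>j<m. d j < n \<Longrightarrow> from_digits n m d < n ^ m"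
proof (induction m arbitrary: d)
  case 0
  then show ?case by (simp add: from_digits_def)
next
  case (Suc m)
  have "from_digits n m (\<lambda>j. d (Suc j)) + 1 \<le> n ^ m"
    using Suc by (simp add: Suc_le_eq)
  then have "n * (from_digits n m (\<lambda>j. d (Suc j)) + 1) \<le> n * n ^ m"
    by (rule mult_le_mono2)
  moreover have "d 0 < n"
    using Suc.prems by auto
  ultimately show ?case
    unfolding from_digits_Suc by (simp add: algebra_simps)
qed

lemma dig_from_digits: "\<forall>j<m. d j < n \<Longrightarrow> k < m \<Longrightarrow> dig n k (from_digits n m d) = d k"
proof (induction m arbitrary: d k)
  case 0
  then show ?case by simp
next
  case (Suc m)
  have "d 0 < n"
    using Suc.prems by auto
  then show ?case
    using Suc.IH[of "\<lambda>j. d (Suc j)"] Suc.prems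
    by (cases k) (auto simp: from_digits_Suc dig_0 dig_Suc)
qed

lemma perm_idx_eq_from_digits: "perm_idx n m f a = from_digits n m (\<lambda>j. dig n (f j) a)"
  by (simp add: perm_idx_def from_digits_def)

lemma perm_idx_less: "0 < n \<Longrightarrow> perm_idx n m f a < n ^ m"
  unfolding perm_idx_eq_from_digits by (rule from_digits_less) (auto simp: dig_less)

lemma dig_perm_idx: "0 < n \<Longrightarrow> j < m \<Longrightarrow> dig n j (perm_idx n m f a) = dig n (f j) a"
  unfolding perm_idx_eq_from_digits by (subst dig_from_digits) (auto simp: dig_less)

lemma perm_idx_comp:
  assumes "0 < n" "\<And>j. j < m \<Longrightarrow> g j < m"
  shows "perm_idx n m g (perm_idx n m f a) = perm_idx n m (f \<circ> g) a"
  by (rule dig_inject[of _ n m]) (auto simp: assms perm_idx_less dig_perm_idx)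

lemma perm_idx_id: "0 < n \<Longrightarrow> a < n ^ m \<Longrightarrow> perm_idx n m id a = a"
  by (rule dig_inject[of _ n m]) (auto simp: perm_idx_less dig_perm_idx)

lemma perm_idx_transpose_involution:
  assumes "0 < n" "k < m" "l < m" "a < n ^ m"
  shows "perm_idx n m (transpose k l) (perm_idx n m (transpose k l) a) = a"
proof -
  have "transpose k l j < m" if "j < m" for j
    using assms(2,3) that by (simp add: transpose_def)
  then show ?thesis
    using assms by (simp add: perm_idx_comp perm_idx_id)
qed

definition digits_agree :: "nat \<Rightarrow> nat \<Rightarrow> nat set \<Rightarrow> nat \<Rightarrow> nat \<Rightarrow> bool" where
  "digits_agree n m K a b \<longleftrightarrow> (\<forall>j<m. j \<notin> K \<longrightarrow> dig n j a = dig n j b)"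

lemma digits_agree_sym: "digits_agree n m K a b = digits_agree n m K b a"
  unfolding digits_agree_def by auto

lemma digits_agree_perm_idx:
  assumes "0 < n" "t permutes {..<m}"
  shows "digits_agree n m K (perm_idx n m t a) (perm_idx n m t b) = digits_agree n m (t ` K) a b"
proof -
  have "(\<forall>j<m. j \<notin> K \<longrightarrow> dig n (t j) a = dig n (t j) b) \<longleftrightarrow>
      (\<forall>i<m. i \<notin> t ` K \<longrightarrow> dig n i a = dig n i b)"
  proof
    assume h: "\<forall>j<m. j \<notin> K \<longrightarrow> dig n (t j) a = dig n (t j) b"
    show "\<forall>i<m. i \<notin> t ` K \<longrightarrow> dig n i a = dig n i b"
    proof (intro allI impI)
      fix i
      assume i: "i < m" "i \<notin> t ` K"
      then obtain j where "j < m" "t j = i"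
        using permutes_image[OF assms(2)] by (metis imageE lessThan_iff)
      then show "dig n i a = dig n i b"
        using h i by blast
    qed
  next
    assume h: "\<forall>i<m. i \<notin> t ` K \<longrightarrow> dig n i a = dig n i b"
    show "\<forall>j<m. j \<notin> K \<longrightarrow> dig n (t j) a = dig n (t j) b"
      using h permutes_in_image[OF assms(2)] permutes_inj[OF assms(2)]
      by (simp add: inj_image_mem_iff)
  qed
  then show ?thesis
    unfolding digits_agree_def using assms(1) by (simp add: dig_perm_idx)
qed

definition digit_upd :: "nat \<Rightarrow> nat \<Rightarrow> nat \<Rightarrow> nat \<Rightarrow> nat \<Rightarrow> nat" where
  "digit_upd n m a k x = from_digits n m (\<lambda>j. if j = k then x else dig n j a)"

lemma digit_upd_less: "0 < n \<Longrightarrow> x < n \<Longrightarrow> digit_upd n m a k x < n ^ m"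
  unfolding digit_upd_def by (rule from_digits_less) (auto simp: dig_less)

lemma dig_digit_upd:
  "0 < n \<Longrightarrow> x < n \<Longrightarrow> j < m \<Longrightarrow> dig n j (digit_upd n m a k x) = (if j = k then x else dig n j a)"
  unfolding digit_upd_def by (subst dig_from_digits) (auto simp: dig_less)

lemma digits_agree_digit_upd:
  "0 < n \<Longrightarrow> x < n \<Longrightarrow> k \<in> K \<Longrightarrow> digits_agree n m K (digit_upd n m a k x) b = digits_agree n m K a b"
  unfolding digits_agree_def by (auto simp: dig_digit_upd)

lemma digits_agree_singleton_eq_image:
  assumes "0 < n" "k < m" "a < n ^ m"
  shows "{c \<in> {..<n ^ m}. digits_agree n m {k} a c} = digit_upd n m a k ` {..<n}"
proof
  show "digit_upd n m a k ` {..<n} \<subseteq> {c \<in> {..<n ^ m}. digits_agree n m {k} a c}"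
    using assms by (auto simp: digit_upd_less digits_agree_def dig_digit_upd)
  show "{c \<in> {..<n ^ m}. digits_agree n m {k} a c} \<subseteq> digit_upd n m a k ` {..<n}"
  proof
    fix c
    assume c: "c \<in> {c \<in> {..<n ^ m}. digits_agree n m {k} a c}"
    have "c = digit_upd n m a k (dig n k c)"
      by (rule dig_inject[of _ n m])
        (use c assms in \<open>auto simp: digit_upd_less dig_less dig_digit_upd digits_agree_def\<close>)
    then show "c \<in> digit_upd n m a k ` {..<n}"
      using assms by (auto simp: dig_less)
  qed
qed

lemma sum_digits_agree_singleton:
  assumes "0 < n" "k < m" "a < n ^ m"
  shows "(\<Sum>c<n ^ m. if digits_agree n m {k} a c then f c else 0) = (\<Sum>x<n. f (digit_upd n m a k x))"
proof -
  have "inj_on (digit_upd n m a k) {..<n}"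
    using assms by (intro inj_onI) (metis dig_digit_upd lessThan_iff)
  then show ?thesis
    using digits_agree_singleton_eq_image[OF assms]
    by (simp add: sum.inter_filter[symmetric] sum.reindex)
qed

lemma index_mult_mat_sum:
  "A \<in> carrier_mat nr nk \<Longrightarrow> B \<in> carrier_mat nk nc \<Longrightarrow> i < nr \<Longrightarrow> j < nc \<Longrightarrow>
   (A * B) $$ (i, j) = (\<Sum>c<nk. A $$ (i, c) * B $$ (c, j))"
  by (auto simp: scalar_prod_def atLeast0LessThan intro!: sum.cong)

lemma index_mult_mat_vec_sum:
  "A \<in> carrier_mat nr nc \<Longrightarrow> v \<in> carrier_vec nc \<Longrightarrow> i < nr \<Longrightarrow>
   (A *\<^sub>v v) $ i = (\<Sum>j<nc. A $$ (i, j) * v $ j)"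
  by (auto simp: scalar_prod_def atLeast0LessThan intro!: sum.cong)

lemma smult_mult_mat_vec:
  "A \<in> carrier_mat nr nc \<Longrightarrow> v \<in> carrier_vec nc \<Longrightarrow> (k \<cdot>\<^sub>m A) *\<^sub>v v = k \<cdot>\<^sub>v (A *\<^sub>v (v :: 'a :: comm_ring vec))"
  by (rule eq_vecI) (auto simp: index_mult_mat_vec_sum[of _ nr nc] sum_distrib_left mult.assoc)

lemma smult_mat_cancel:
  fixes M :: "'a :: idom mat"
  assumes "M \<in> carrier_mat nr nc" "s \<cdot>\<^sub>m M = t \<cdot>\<^sub>m M" "s \<noteq> t"
  shows "M = 0\<^sub>m nr nc"
proof (rule eq_matI)
  fix i j
  assume "i < dim_row (0\<^sub>m nr nc :: 'a mat)" "j < dim_col (0\<^sub>m nr nc :: 'a mat)"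
  then have "s * M $$ (i, j) = t * M $$ (i, j)"
    using arg_cong[OF assms(2), of "\<lambda>A. A $$ (i, j)"] assms(1) by auto
  then show "M $$ (i, j) = 0\<^sub>m nr nc $$ (i, j)"
    using assms(1,3) \<open>i < _\<close> \<open>j < _\<close> by auto
qed (use assms in auto)

lemma mult_similar_mult_similar:
  fixes P Q X Y :: "'a :: semiring_1 mat"
  assumes "P \<in> carrier_mat n n" "Q \<in> carrier_mat n n" "X \<in> carrier_mat n n" "Y \<in> carrier_mat n n"
    "Q * P = 1\<^sub>m n"
  shows "(P * X * Q) * (P * Y * Q) = P * (X * Y) * Q"
proof -
  have "(P * X * Q) * (P * Y * Q) = P * X * ((Q * P) * (Y * Q))"
    using assms(1-4) by (simp add: assoc_mult_mat[of _ n n _ n _ n])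
  also have "\<dots> = P * X * (Y * Q)"
    using left_mult_one_mat[of "Y * Q" n n] assms by simp
  also have "\<dots> = P * (X * Y) * Q"
    using assms(1-4) by (simp add: assoc_mult_mat[of _ n n _ n _ n])
  finally show ?thesis .
qed

lemma mtrace_mult_sum:
  assumes "A \<in> carrier_mat N N" "B \<in> carrier_mat N N"
  shows "mtrace (A * B) = (\<Sum>a<N. \<Sum>b<N. A $$ (a, b) * B $$ (b, a))"
proof -
  have "mtrace (A * B) = (\<Sum>a<N. (A * B) $$ (a, a))"
    unfolding mtrace_def using assms by simp
  also have "\<dots> = (\<Sum>a<N. \<Sum>b<N. A $$ (a, b) * B $$ (b, a))"
    using assms by (intro sum.cong refl index_mult_mat_sum) auto
  finally show ?thesis .
qed

lemma mtrace_mult_comm: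
  assumes "A \<in> carrier_mat N N" "B \<in> carrier_mat N N"
  shows "mtrace (A * B) = mtrace (B * A)"
  unfolding mtrace_mult_sum[OF assms] mtrace_mult_sum[OF assms(2,1)]
  by (subst sum.swap) (simp add: mult.commute)

lemma mtrace_minus:
  "A \<in> carrier_mat N N \<Longrightarrow> B \<in> carrier_mat N N \<Longrightarrow> mtrace (A - B) = mtrace A - mtrace B"
  unfolding mtrace_def by (simp add: sum_subtractf)

lemma adjoint_dim [simp]:
  "dim_row (mat_adjoint A) = dim_col A" "dim_col (mat_adjoint A) = dim_row A"
  by (simp_all add: mat_adjoint_def mat_of_rows_def)

lemma index_adjoint [simp]:
  "i < dim_col A \<Longrightarrow> j < dim_row A \<Longrightarrow> mat_adjoint A $$ (i, j) = conjugate (A $$ (j, i))"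
  by (simp add: mat_adjoint_def mat_of_rows_def)

lemma adjoint_carrier [simp]: "A \<in> carrier_mat nr nc \<Longrightarrow> mat_adjoint A \<in> carrier_mat nc nr"
  unfolding carrier_mat_def by simp

lemma adjoint_adjoint [simp]: "mat_adjoint (mat_adjoint (A :: complex mat)) = A"
  by (rule eq_matI) auto

lemma adjoint_mult:
  assumes "A \<in> carrier_mat nr nk" "B \<in> carrier_mat nk nc"
  shows "mat_adjoint (A * B) = mat_adjoint B * mat_adjoint (A :: complex mat)"
proof (rule eq_matI)
  fix i j
  assume "i < dim_row (mat_adjoint B * mat_adjoint A)" "j < dim_col (mat_adjoint B * mat_adjoint A)"
  then have i: "i < nc" and j: "j < nr"
    using assms by auto
  have "mat_adjoint (A * B) $$ (i, j) = conjugate (\<Sum>c<nk. A $$ (j, c) * B $$ (c, i))"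
    using assms i j by (simp add: index_mult_mat_sum[OF assms, symmetric])
  also have "\<dots> = (\<Sum>c<nk. mat_adjoint B $$ (i, c) * mat_adjoint A $$ (c, j))"
    using assms i j by (simp add: mult.commute)
  also have "\<dots> = (mat_adjoint B * mat_adjoint A) $$ (i, j)"
    using assms i j by (intro index_mult_mat_sum[symmetric]) auto
  finally show "mat_adjoint (A * B) $$ (i, j) = (mat_adjoint B * mat_adjoint A) $$ (i, j)" .
qed (use assms in auto)

lemma adjoint_smult: "mat_adjoint (c \<cdot>\<^sub>m (A :: complex mat)) = conjugate c \<cdot>\<^sub>m mat_adjoint A"
  by (rule eq_matI) auto

lemma self_adjoint_index:
  assumes "mat_adjoint A = A" "A \<in> carrier_mat n n" "i < n" "j < n"
  shows "cnj (A $$ (j, i)) = (A :: complex mat) $$ (i, j)"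
  using index_adjoint[of i A j] assms by auto

lemma sprod_mult_mat_vec_adjoint:
  assumes "A \<in> carrier_mat nr nc" "v \<in> carrier_vec nr" "w \<in> carrier_vec nc"
  shows "conjugate v \<bullet> (A *\<^sub>v w) = conjugate (mat_adjoint A *\<^sub>v v) \<bullet> (w :: complex vec)"
proof -
  have "conjugate v \<bullet> (A *\<^sub>v w) = (\<Sum>i<nr. conjugate (v $ i) * (\<Sum>j<nc. A $$ (i, j) * w $ j))"
    using assms by (auto simp: scalar_prod_def atLeast0LessThan intro!: sum.cong)
  also have "\<dots> = (\<Sum>i<nr. \<Sum>j<nc. conjugate (v $ i) * A $$ (i, j) * w $ j)"
    by (simp add: sum_distrib_left mult.assoc)
  also have "\<dots> = (\<Sum>j<nc. conjugate (\<Sum>i<nr. conjugate (A $$ (i, j)) * v $ i) * w $ j)"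
    by (subst sum.swap) (simp add: sum_distrib_left sum_distrib_right mult.commute mult.left_commute)
  also have "\<dots> = conjugate (mat_adjoint A *\<^sub>v v) \<bullet> w"
    using assms by (auto simp: scalar_prod_def atLeast0LessThan intro!: sum.cong)
  finally show ?thesis .
qed

lemma conjugate_sprod_self_nonneg:
  fixes w :: "complex vec"
  assumes "w \<in> carrier_vec N"
  shows "Im (conjugate w \<bullet> w) = 0" "Re (conjugate w \<bullet> w) \<ge> 0"
proof -
  have "w \<bullet>c w = conjugate w \<bullet> w"
    by (rule conjugate_vec_sprod_comm[OF assms assms])
  moreover have "w \<bullet>c w \<ge> 0"
    by (rule conjugate_square_ge_0_vec)
  ultimately have "conjugate w \<bullet> w \<ge> 0"
    by simp
  then show "Im (conjugate w \<bullet> w) = 0" "Re (conjugate w \<bullet> w) \<ge> 0"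
    by (auto simp: less_eq_complex_def)
qed

lemma conjugate_sprod_self_eq_0:
  fixes w :: "complex vec"
  assumes "w \<in> carrier_vec N"
  shows "conjugate w \<bullet> w = 0 \<longleftrightarrow> w = 0\<^sub>v N"
proof -
  have "w \<bullet>c w = conjugate w \<bullet> w"
    by (rule conjugate_vec_sprod_comm[OF assms assms])
  then show ?thesis
    using conjugate_square_eq_0_vec[OF assms] by auto
qed

lemma proj_complement:
  fixes E :: "complex mat"
  assumes E: "self_adjoint n E" "E * E = E"
  shows "self_adjoint n (1\<^sub>m n - E)" "(1\<^sub>m n - E) * (1\<^sub>m n - E) = 1\<^sub>m n - E"
proof -
  have E_carrier: "E \<in> carrier_mat n n"
    using E(1) by (simp add: self_adjoint_def)
  have "mat_adjoint (1\<^sub>m n - E) = 1\<^sub>m n - E"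
    by (rule eq_matI) (use E E_carrier in \<open>auto simp: self_adjoint_def self_adjoint_index\<close>)
  then show "self_adjoint n (1\<^sub>m n - E)"
    using E_carrier by (simp add: self_adjoint_def minus_carrier_mat)
  have "(1\<^sub>m n - E) * (1\<^sub>m n - E) = (1\<^sub>m n - E) * 1\<^sub>m n - (1\<^sub>m n - E) * E"
    using E_carrier by (intro mult_minus_distrib_mat[of _ n n]) auto
  also have "(1\<^sub>m n - E) * E = 1\<^sub>m n * E - E * E"
    using E_carrier by (intro minus_mult_distrib_mat[of _ n n]) auto
  also have "\<dots> = 0\<^sub>m n n"
    using E_carrier E(2) by (auto intro!: eq_matI)
  finally show "(1\<^sub>m n - E) * (1\<^sub>m n - E) = 1\<^sub>m n - E"
    using E_carrier by (auto intro!: eq_matI)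
qed

section \<open>Operators acting on one or two tensor factors\<close>

lemma emb_carrier [simp]: "emb n m k X \<in> carrier_mat (n ^ m) (n ^ m)"
  by (simp add: emb_def)

lemma emb_dim [simp]: "dim_row (emb n m k X) = n ^ m" "dim_col (emb n m k X) = n ^ m"
  by (simp_all add: emb_def)

lemma index_emb:
  "a < n ^ m \<Longrightarrow> b < n ^ m \<Longrightarrow>
   emb n m k X $$ (a, b) = (if digits_agree n m {k} a b then X $$ (dig n k a, dig n k b) else 0)"
  by (simp add: emb_def digits_agree_def)

text \<open>For k \<noteq> l, emb_pair n m k l X Y is the operator X^(k) Y^(l).\<close>

definition emb_pair :: "nat \<Rightarrow> nat \<Rightarrow> nat \<Rightarrow> nat \<Rightarrow> complex mat \<Rightarrow> complex mat \<Rightarrow> complex mat" where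
  "emb_pair n m k l X Y = mat (n ^ m) (n ^ m) (\<lambda>(a, b).
     if digits_agree n m {k, l} a b then X $$ (dig n k a, dig n k b) * Y $$ (dig n l a, dig n l b)
     else 0)"

lemma emb_pair_carrier [simp]: "emb_pair n m k l X Y \<in> carrier_mat (n ^ m) (n ^ m)"
  by (simp add: emb_pair_def)

lemma emb_pair_dim [simp]:
  "dim_row (emb_pair n m k l X Y) = n ^ m" "dim_col (emb_pair n m k l X Y) = n ^ m"
  by (simp_all add: emb_pair_def)

lemma index_emb_pair:
  "a < n ^ m \<Longrightarrow> b < n ^ m \<Longrightarrow> emb_pair n m k l X Y $$ (a, b) =
   (if digits_agree n m {k, l} a b then X $$ (dig n k a, dig n k b) * Y $$ (dig n l a, dig n l b)
    else 0)"
  by (simp add: emb_pair_def)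

lemma emb_pair_comm: "emb_pair n m k l X Y = emb_pair n m l k Y X"
  unfolding emb_pair_def by (rule eq_matI) (auto simp: insert_commute)

lemma emb_mult_emb_same:
  assumes "0 < n" "k < m" "A \<in> carrier_mat n n" "B \<in> carrier_mat n n"
  shows "emb n m k A * emb n m k B = emb n m k (A * B)"
proof (rule eq_matI)
  fix a b
  assume "a < dim_row (emb n m k (A * B))" "b < dim_col (emb n m k (A * B))"
  then have a: "a < n ^ m" and b: "b < n ^ m"
    by auto
  have "(emb n m k A * emb n m k B) $$ (a, b) =
      (\<Sum>c<n ^ m. emb n m k A $$ (a, c) * emb n m k B $$ (c, b))"
    using a b by (intro index_mult_mat_sum) auto
  also have "\<dots> = (\<Sum>c<n ^ m. if digits_agree n m {k} a c
      then A $$ (dig n k a, dig n k c) * emb n m k B $$ (c, b) else 0)"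
    using a by (intro sum.cong) (auto simp: index_emb)
  also have "\<dots> = (\<Sum>x<n. A $$ (dig n k a, dig n k (digit_upd n m a k x)) *
      emb n m k B $$ (digit_upd n m a k x, b))"
    by (rule sum_digits_agree_singleton[OF assms(1,2) a])
  also have "\<dots> = (\<Sum>x<n. if digits_agree n m {k} a b
      then A $$ (dig n k a, x) * B $$ (x, dig n k b) else 0)"
    using assms b
    by (intro sum.cong) (auto simp: index_emb digit_upd_less dig_digit_upd digits_agree_digit_upd)
  also have "\<dots> = emb n m k (A * B) $$ (a, b)"
  proof -
    have "(A * B) $$ (dig n k a, dig n k b) = (\<Sum>x<n. A $$ (dig n k a, x) * B $$ (x, dig n k b))"
      using assms by (intro index_mult_mat_sum) (auto simp: dig_less)
    then show ?thesis
      using a b by (simp add: index_emb)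
  qed
  finally show "(emb n m k A * emb n m k B) $$ (a, b) = emb n m k (A * B) $$ (a, b)" .
qed auto

lemma emb_mult_emb:
  assumes "0 < n" "k < m" "l < m" "k \<noteq> l" "A \<in> carrier_mat n n" "B \<in> carrier_mat n n"
  shows "emb n m k A * emb n m l B = emb_pair n m k l A B"
proof (rule eq_matI)
  fix a b
  assume "a < dim_row (emb_pair n m k l A B)" "b < dim_col (emb_pair n m k l A B)"
  then have a: "a < n ^ m" and b: "b < n ^ m"
    by auto
  have upd: "digits_agree n m {l} (digit_upd n m a k x) b \<longleftrightarrow>
      x = dig n k b \<and> digits_agree n m {k, l} a b" if "x < n" for x
    using assms that unfolding digits_agree_def by (auto simp: dig_digit_upd)
  have "(emb n m k A * emb n m l B) $$ (a, b) =
      (\<Sum>c<n ^ m. emb n m k A $$ (a, c) * emb n m l B $$ (c, b))"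
    using a b by (intro index_mult_mat_sum) auto
  also have "\<dots> = (\<Sum>c<n ^ m. if digits_agree n m {k} a c
      then A $$ (dig n k a, dig n k c) * emb n m l B $$ (c, b) else 0)"
    using a by (intro sum.cong) (auto simp: index_emb)
  also have "\<dots> = (\<Sum>x<n. A $$ (dig n k a, dig n k (digit_upd n m a k x)) *
      emb n m l B $$ (digit_upd n m a k x, b))"
    by (rule sum_digits_agree_singleton[OF assms(1,2) a])
  also have "\<dots> = (\<Sum>x<n. if x = dig n k b then emb_pair n m k l A B $$ (a, b) else 0)"
    using assms a b upd by (intro sum.cong) (auto simp: index_emb index_emb_pair digit_upd_less dig_digit_upd)
  also have "\<dots> = emb_pair n m k l A B $$ (a, b)"
    using assms by (simp add: dig_less)
  finally show "(emb n m k A * emb n m l B) $$ (a, b) = emb_pair n m k l A B $$ (a, b)" .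
qed auto

lemma emb_mult_emb_commute:
  assumes "0 < n" "k < m" "l < m" "k \<noteq> l" "A \<in> carrier_mat n n" "B \<in> carrier_mat n n"
  shows "emb n m k A * emb n m l B = emb n m l B * emb n m k A"
  using assms emb_mult_emb emb_pair_comm by metis

lemma emb_pair_one_left:
  assumes "0 < n" "k < m" "k \<noteq> l"
  shows "emb_pair n m k l (1\<^sub>m n) B = emb n m l B"
proof (rule eq_matI)
  fix a b
  assume "a < dim_row (emb n m l B)" "b < dim_col (emb n m l B)"
  moreover have "(digits_agree n m {k, l} a b \<and> dig n k a = dig n k b) \<longleftrightarrow> digits_agree n m {l} a b"
    using assms unfolding digits_agree_def by auto
  ultimately show "emb_pair n m k l (1\<^sub>m n) B $$ (a, b) = emb n m l B $$ (a, b)"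
    using assms by (auto simp: index_emb index_emb_pair dig_less)
qed auto

lemma emb_pair_minus_left:
  "0 < n \<Longrightarrow> A \<in> carrier_mat n n \<Longrightarrow> B \<in> carrier_mat n n \<Longrightarrow>
   emb_pair n m k l (A - B) C = emb_pair n m k l A C - emb_pair n m k l B C"
  by (rule eq_matI) (auto simp: index_emb_pair dig_less algebra_simps)

lemma emb_pair_self_adjoint:
  assumes "0 < n" "self_adjoint n A" "self_adjoint n B"
  shows "mat_adjoint (emb_pair n m k l A B) = emb_pair n m k l A B"
proof (rule eq_matI)
  fix a b
  assume "a < dim_row (emb_pair n m k l A B)" "b < dim_col (emb_pair n m k l A B)"
  then show "mat_adjoint (emb_pair n m k l A B) $$ (a, b) = emb_pair n m k l A B $$ (a, b)"
    using assms
    by (auto simp: index_emb_pair digits_agree_sym[of n m "{k, l}" b a] self_adjoint_def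
        self_adjoint_index dig_less)
qed auto

lemma emb_pair_idem:
  assumes "0 < n" "k < m" "l < m" "k \<noteq> l" "A \<in> carrier_mat n n" "B \<in> carrier_mat n n"
    "A * A = A" "B * B = B"
  shows "emb_pair n m k l A B * emb_pair n m k l A B = emb_pair n m k l A B"
proof -
  let ?N = "n ^ m"
  define X where "X = emb n m k A"
  define Y where "Y = emb n m l B"
  have X: "X \<in> carrier_mat ?N ?N" and Y: "Y \<in> carrier_mat ?N ?N"
    by (auto simp: X_def Y_def)
  have XY: "X * Y = emb_pair n m k l A B"
    unfolding X_def Y_def by (rule emb_mult_emb[OF assms(1-6)])
  have "Y * X = X * Y"
    unfolding X_def Y_def using assms by (metis emb_mult_emb_commute)
  then have "(X * Y) * (X * Y) = (X * X) * (Y * Y)"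
    using X Y by (metis assoc_mult_mat mult_carrier_mat)
  also have "\<dots> = X * Y"
    unfolding X_def Y_def using assms by (simp add: emb_mult_emb_same)
  finally show ?thesis
    unfolding XY .
qed

lemma mtrace_emb_mult:
  assumes "\<rho> \<in> carrier_mat (n ^ m) (n ^ m)"
  shows "mtrace (emb n m k X * \<rho>) = (\<Sum>a<n ^ m. \<Sum>b<n ^ m.
    if digits_agree n m {k} a b then X $$ (dig n k a, dig n k b) * \<rho> $$ (b, a) else 0)"
  using assms by (simp add: mtrace_mult_sum[OF emb_carrier] index_emb) (intro sum.cong refl, auto)

lemma sum_emb_mult_index:
  assumes "0 < n" "l < m" "\<rho> \<in> carrier_mat (n ^ m) (n ^ m)" "a < n ^ m" "b < n ^ m"
    and resolution: "\<And>i j. i < n \<Longrightarrow> j < n \<Longrightarrow> (\<Sum>s\<in>S. E s $$ (i, j)) = (if i = j then 1 else 0)"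
  shows "(\<Sum>s\<in>S. (emb n m l (E s) * \<rho>) $$ (a, b)) = \<rho> $$ (a, b)"
proof -
  have "(\<Sum>s\<in>S. emb n m l (E s) $$ (a, c)) = (if a = c then 1 else 0)" if c: "c < n ^ m" for c
  proof -
    have "(\<Sum>s\<in>S. emb n m l (E s) $$ (a, c)) =
        (if digits_agree n m {l} a c then \<Sum>s\<in>S. E s $$ (dig n l a, dig n l c) else 0)"
      using assms(4) c by (simp add: index_emb)
    also have "\<dots> = (if digits_agree n m {l} a c \<and> dig n l a = dig n l c then 1 else 0)"
      using assms(1) by (simp add: resolution dig_less)
    also have "digits_agree n m {l} a c \<and> dig n l a = dig n l c \<longleftrightarrow> a = c"
      using dig_inject[of a n m c] assms(4) c unfolding digits_agree_def by auto
    finally show ?thesis .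
  qed
  note resolution_emb = this
  have "(\<Sum>s\<in>S. (emb n m l (E s) * \<rho>) $$ (a, b)) =
      (\<Sum>s\<in>S. \<Sum>c<n ^ m. emb n m l (E s) $$ (a, c) * \<rho> $$ (c, b))"
    using assms(3-5) by (intro sum.cong refl index_mult_mat_sum) auto
  also have "\<dots> = (\<Sum>c<n ^ m. (\<Sum>s\<in>S. emb n m l (E s) $$ (a, c)) * \<rho> $$ (c, b))"
    by (subst sum.swap) (simp add: sum_distrib_right)
  also have "\<dots> = (\<Sum>c<n ^ m. if c = a then \<rho> $$ (c, b) else 0)"
    by (intro sum.cong refl) (auto simp: resolution_emb)
  also have "\<dots> = \<rho> $$ (a, b)"
    using assms(4) by simp
  finally show ?thesis .
qed

lemma emb_pair_rank_one_swap_row: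
  assumes "0 < n" "k < m" "l < m" "a < n ^ m" "c < n ^ m"
    and rank_one: "\<forall>i<n. \<forall>j<n. E $$ (i, j) = p i * q j"
  shows "emb_pair n m k l E E $$ (perm_idx n m (transpose k l) a, c) = emb_pair n m k l E E $$ (a, c)"
proof -
  let ?a' = "perm_idx n m (transpose k l) a"
  have dig: "dig n j ?a' = dig n (transpose k l j) a" if "j < m" for j
    using assms(1) that by (rule dig_perm_idx)
  have "digits_agree n m {k, l} ?a' c = digits_agree n m {k, l} a c"
    unfolding digits_agree_def using dig by auto
  moreover have "E $$ (dig n k ?a', dig n k c) * E $$ (dig n l ?a', dig n l c) =
      E $$ (dig n k a, dig n k c) * E $$ (dig n l a, dig n l c)"
    using dig[OF assms(2)] dig[OF assms(3)] rank_one assms(1) by (simp add: dig_less)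
  ultimately show ?thesis
    using assms(1,4,5) by (simp add: index_emb_pair perm_idx_less)
qed

lemma emb_pair_rank_one_mult_swap_row:
  assumes "0 < n" "k < m" "l < m" "a < n ^ m" "b < n ^ m" "\<rho> \<in> carrier_mat (n ^ m) (n ^ m)"
    and rank_one: "\<forall>i<n. \<forall>j<n. E $$ (i, j) = p i * q j"
  shows "(emb_pair n m k l E E * \<rho>) $$ (perm_idx n m (transpose k l) a, b) =
    (emb_pair n m k l E E * \<rho>) $$ (a, b)"
proof -
  let ?N = "n ^ m" and ?a' = "perm_idx n m (transpose k l) a"
  have "(emb_pair n m k l E E * \<rho>) $$ (?a', b) = (\<Sum>c<?N. emb_pair n m k l E E $$ (?a', c) * \<rho> $$ (c, b))"
    using assms(1,5,6) perm_idx_less by (intro index_mult_mat_sum) auto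
  also have "\<dots> = (\<Sum>c<?N. emb_pair n m k l E E $$ (a, c) * \<rho> $$ (c, b))"
    using emb_pair_rank_one_swap_row[OF assms(1-4) _ rank_one] by (intro sum.cong) auto
  also have "\<dots> = (emb_pair n m k l E E * \<rho>) $$ (a, b)"
    using assms(4-6) by (intro index_mult_mat_sum[symmetric]) auto
  finally show ?thesis .
qed

lemma emb_pair_complement:
  assumes n: "0 < n" and kl: "k < m" "l < m" "k \<noteq> l" and E: "self_adjoint n E" "E * E = E"
  shows "emb_pair n m k l (1\<^sub>m n - E) E = emb n m l E - emb n m k E * emb n m l E"
    "mat_adjoint (emb_pair n m k l (1\<^sub>m n - E) E) = emb_pair n m k l (1\<^sub>m n - E) E"
    "emb_pair n m k l (1\<^sub>m n - E) E * emb_pair n m k l (1\<^sub>m n - E) E = emb_pair n m k l (1\<^sub>m n - E) E"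
proof -
  have E_carrier: "E \<in> carrier_mat n n"
    using E(1) by (simp add: self_adjoint_def)
  note E' = proj_complement[OF E]
  show "emb_pair n m k l (1\<^sub>m n - E) E = emb n m l E - emb n m k E * emb n m l E"
    unfolding emb_pair_minus_left[OF n one_carrier_mat E_carrier]
      emb_pair_one_left[OF n kl(1,3)] emb_mult_emb[OF n kl E_carrier E_carrier] ..
  show "mat_adjoint (emb_pair n m k l (1\<^sub>m n - E) E) = emb_pair n m k l (1\<^sub>m n - E) E"
    using emb_pair_self_adjoint[OF n E'(1) E(1)] .
  show "emb_pair n m k l (1\<^sub>m n - E) E * emb_pair n m k l (1\<^sub>m n - E) E = emb_pair n m k l (1\<^sub>m n - E) E"
    using emb_pair_idem[OF n kl _ E_carrier E'(2) E(2)] E_carrier by (simp add: minus_carrier_mat)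
qed

section \<open>Spectral decomposition of Hermitian matrices\<close>

lemma hermitian_eigenvalue_real:
  fixes A :: "complex mat"
  assumes "A \<in> carrier_mat n n" "mat_adjoint A = A" "v \<in> carrier_vec n" "v \<noteq> 0\<^sub>v n"
    "A *\<^sub>v v = e \<cdot>\<^sub>v v"
  shows "conjugate e = e"
proof -
  have "conjugate v \<bullet> (A *\<^sub>v v) = conjugate (A *\<^sub>v v) \<bullet> v"
    using sprod_mult_mat_vec_adjoint[OF assms(1,3,3)] assms(2) by simp
  then have "e * (conjugate v \<bullet> v) = conjugate e * (conjugate v \<bullet> v)"
    using assms by (simp add: conjugate_smult_vec)
  then show ?thesis
    using conjugate_sprod_self_eq_0[OF assms(3)] assms(4) by simp
qed

lemma char_matrix_self_adjoint:
  fixes A :: "complex mat"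
  assumes "A \<in> carrier_mat n n" "mat_adjoint A = A" "conjugate e = e"
  shows "mat_adjoint (char_matrix A e) = char_matrix A e"
proof (rule eq_matI)
  fix i j
  assume "i < dim_row (char_matrix A e)" "j < dim_col (char_matrix A e)"
  then show "mat_adjoint (char_matrix A e) $$ (i, j) = char_matrix A e $$ (i, j)"
    using assms self_adjoint_index[OF assms(2,1), of i j] by (auto simp: char_matrix_def)
qed (use assms in \<open>auto simp: char_matrix_def\<close>)

text \<open>Hermitian matrices have no nilpotent part: all their Jordan blocks have size one.\<close>

lemma hermitian_char_matrix_kernel_sq:
  fixes A :: "complex mat"
  assumes A: "A \<in> carrier_mat n n" and H: "mat_adjoint A = A"
  shows "mat_kernel (char_matrix A e ^\<^sub>m 2) = mat_kernel (char_matrix A e ^\<^sub>m 1)"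
proof -
  define B where "B = char_matrix A e"
  have B: "B \<in> carrier_mat n n"
    using A by (simp add: B_def)
  have "B *\<^sub>v v = 0\<^sub>v n" if v: "v \<in> carrier_vec n" and BBv: "B *\<^sub>v (B *\<^sub>v v) = 0\<^sub>v n" for v
  proof (rule ccontr)
    define w where "w = B *\<^sub>v v"
    have w: "w \<in> carrier_vec n"
      using B v by (simp add: w_def)
    assume "B *\<^sub>v v \<noteq> 0\<^sub>v n"
    then have "eigenvector A w e"
      using eigenvector_char_matrix[OF A] w BBv by (simp add: w_def B_def)
    then have "conjugate e = e"
      using hermitian_eigenvalue_real[OF A H w] A by (simp add: eigenvector_def)
    then have BH: "mat_adjoint B = B"
      unfolding B_def using A H by (intro char_matrix_self_adjoint)
    have "conjugate w \<bullet> w = conjugate v \<bullet> (B *\<^sub>v w)"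
      using sprod_mult_mat_vec_adjoint[OF B v w] BH by (simp add: w_def)
    also have "\<dots> = 0"
      using BBv v by (simp add: w_def)
    finally show False
      using conjugate_sprod_self_eq_0[OF w] \<open>B *\<^sub>v v \<noteq> 0\<^sub>v n\<close> by (simp add: w_def)
  qed
  moreover have "B ^\<^sub>m 1 = B" "B ^\<^sub>m 2 = B * B"
    using B by (simp_all add: numeral_2_eq_2)
  ultimately show ?thesis
    unfolding B_def[symmetric] mat_kernel_def using B
    by (auto simp: assoc_mult_mat_vec[of _ n n _ n])
qed

lemma sum_list_map_mono_eq:
  fixes f g :: "'a \<Rightarrow> nat"
  shows "\<forall>x\<in>set xs. g x \<le> f x \<Longrightarrow> sum_list (map f xs) = sum_list (map g xs) \<Longrightarrow> \<forall>x\<in>set xs. f x = g x"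
proof (induction xs)
  case Nil
  then show ?case by simp
next
  case (Cons a xs)
  have "sum_list (map g xs) \<le> sum_list (map f xs)"
    using Cons.prems(1) by (intro sum_list_mono) auto
  moreover have "g a \<le> f a"
    using Cons.prems(1) by auto
  ultimately have "f a = g a" and sums: "sum_list (map f xs) = sum_list (map g xs)"
    using Cons.prems(2) by auto
  moreover have "\<forall>x\<in>set xs. f x = g x"
    using Cons.IH Cons.prems(1) sums by simp
  ultimately show ?case
    by simp
qed

lemma jordan_matrix_diagonal:
  assumes "\<forall>(k, a)\<in>set n_as. k = 1"
  shows "diagonal_mat (jordan_matrix n_as :: 'a :: {zero, one} mat)"
proof -
  have "jordan_matrix n_as $$ (i, j) = (0 :: 'a)"
    if "i < sum_list (map fst n_as)" "j < sum_list (map fst n_as)" "i \<noteq> j" for i j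
    using assms that
  proof (induction n_as arbitrary: i j)
    case Nil
    then show ?case by simp
  next
    case (Cons ka n_as)
    obtain a where ka: "ka = (1, a)"
      using Cons.prems(1) by (cases ka) auto
    have "jordan_matrix n_as $$ (i - 1, j - 1) = (0 :: 'a)"
      if "i - 1 < sum_list (map fst n_as)" "j - 1 < sum_list (map fst n_as)" "i - 1 \<noteq> j - 1"
      using Cons.IH Cons.prems(1) that by auto
    then show ?case
      unfolding ka jordan_matrix_Cons using Cons.prems(2-4) ka by auto
  qed
  then show ?thesis
    unfolding diagonal_mat_def by simp
qed

lemma hermitian_diagonalizable:
  fixes A :: "complex mat"
  assumes A: "A \<in> carrier_mat n n" and H: "mat_adjoint A = A"
  obtains P Q J where "P \<in> carrier_mat n n" "Q \<in> carrier_mat n n" "J \<in> carrier_mat n n"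
    "P * Q = 1\<^sub>m n" "Q * P = 1\<^sub>m n" "A = P * J * Q" "diagonal_mat J"
proof -
  obtain as where "char_poly A = (\<Prod>a\<leftarrow>as. [:- a, 1:])"
    using char_poly_factorized[OF A] by auto
  then obtain n_as where jnf: "jordan_nf A n_as"
    using jordan_nf_exists[OF A] by blast
  have sizes: "\<forall>(k, a)\<in>set n_as. k = 1"
  proof
    fix x
    assume x: "x \<in> set n_as"
    obtain k a where xka: "x = (k, a)"
      by force
    let ?L = "map fst (filter (\<lambda>(n, e). e = a) n_as)"
    have "dim_gen_eigenspace A a 2 = dim_gen_eigenspace A a 1"
      unfolding dim_gen_eigenspace_def kernel_dim_def
      using hermitian_char_matrix_kernel_sq[OF A H, of a] by simp
    then have "sum_list (map (min 2) ?L) = sum_list (map (min 1) ?L)"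
      unfolding dim_gen_eigenspace[OF jnf] by simp
    then have "\<forall>y\<in>set ?L. min 2 y = min 1 y"
      by (intro sum_list_map_mono_eq) auto
    moreover have "k \<in> set ?L"
      using x xka by force
    ultimately have "min 2 k = min 1 k"
      by blast
    moreover have "k \<noteq> 0"
      using jnf x xka unfolding jordan_nf_def by force
    ultimately show "case x of (k, a) \<Rightarrow> k = 1"
      using xka by simp
  qed
  from jnf obtain P Q where wit: "similar_mat_wit A (jordan_matrix n_as) P Q"
    unfolding jordan_nf_def similar_mat_def by blast
  have "n = dim_row A"
    using A by simp
  note wit = similar_mat_witD[OF this wit]
  show ?thesis
    by (rule that[OF wit(6,7,5,1,2,3) jordan_matrix_diagonal[OF sizes]])
qed

lemma index_mult_diagonal:
  assumes "diagonal_mat X" "diagonal_mat Y" "X \<in> carrier_mat n n" "Y \<in> carrier_mat n n" "i < n" "j < n"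
  shows "(X * Y) $$ (i, j) = (if i = j then X $$ (i, i) * Y $$ (i, i) else 0)"
proof -
  have "(X * Y) $$ (i, j) = (\<Sum>c<n. X $$ (i, c) * Y $$ (c, j))"
    using assms by (intro index_mult_mat_sum) auto
  also have "\<dots> = (\<Sum>c<n. if c = i then X $$ (i, c) * Y $$ (c, j) else 0)"
    using assms(1,3,5) by (intro sum.cong) (auto simp: diagonal_mat_def)
  also have "\<dots> = X $$ (i, i) * Y $$ (i, j)"
    using assms(5) by simp
  finally show ?thesis
    using assms(2,4-6) by (auto simp: diagonal_mat_def)
qed

lemma index_mult_diagonal_mult:
  assumes "A \<in> carrier_mat n n" "X \<in> carrier_mat n n" "B \<in> carrier_mat n n" "diagonal_mat X"
    "i < n" "j < n"
  shows "(A * X * B) $$ (i, j) = (\<Sum>a<n. A $$ (i, a) * X $$ (a, a) * B $$ (a, j))"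
proof -
  have AX: "(A * X) $$ (i, b) = A $$ (i, b) * X $$ (b, b)" if b: "b < n" for b
  proof -
    have "(A * X) $$ (i, b) = (\<Sum>a<n. A $$ (i, a) * X $$ (a, b))"
      using assms b by (intro index_mult_mat_sum) auto
    also have "\<dots> = (\<Sum>a<n. if a = b then A $$ (i, a) * X $$ (a, b) else 0)"
      using assms(2,4) b by (intro sum.cong) (auto simp: diagonal_mat_def)
    finally show ?thesis
      using b by simp
  qed
  have "(A * X * B) $$ (i, j) = (\<Sum>b<n. (A * X) $$ (i, b) * B $$ (b, j))"
    using assms by (intro index_mult_mat_sum[of _ n n]) auto
  also have "\<dots> = (\<Sum>a<n. A $$ (i, a) * X $$ (a, a) * B $$ (a, j))"
    using AX by (intro sum.cong) auto
  finally show ?thesis .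
qed

definition diag_indicator :: "nat \<Rightarrow> complex mat \<Rightarrow> complex \<Rightarrow> complex mat" where
  "diag_indicator n J s = mat n n (\<lambda>(i, j). if i = j \<and> J $$ (i, i) = s then 1 else 0)"

lemma diag_indicator_dim [simp]: "dim_row (diag_indicator n J s) = n" "dim_col (diag_indicator n J s) = n"
  by (simp_all add: diag_indicator_def)

lemma diag_indicator_carrier [simp]: "diag_indicator n J s \<in> carrier_mat n n"
  by (simp add: carrier_matI)

lemma diagonal_diag_indicator: "diagonal_mat (diag_indicator n J s)"
  by (simp add: diag_indicator_def diagonal_mat_def)

lemma diagonal_mult_diag_indicator:
  assumes J: "J \<in> carrier_mat n n" "diagonal_mat J"
  shows "J * diag_indicator n J s = s \<cdot>\<^sub>m diag_indicator n J s"
    "diag_indicator n J s * J = s \<cdot>\<^sub>m diag_indicator n J s"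
    "diag_indicator n J s * diag_indicator n J s = diag_indicator n J s"
proof -
  let ?D = "diag_indicator n J s"
  note D = diagonal_diag_indicator diag_indicator_carrier
  show "J * ?D = s \<cdot>\<^sub>m ?D"
  proof (rule eq_matI)
    fix i j
    assume "i < dim_row (s \<cdot>\<^sub>m ?D)" "j < dim_col (s \<cdot>\<^sub>m ?D)"
    then have ij: "i < n" "j < n"
      by auto
    show "(J * ?D) $$ (i, j) = (s \<cdot>\<^sub>m ?D) $$ (i, j)"
      unfolding index_mult_diagonal[OF J(2) D(1) J(1) D(2) ij] using ij by (simp add: diag_indicator_def)
  qed (use J in auto)
  show "?D * J = s \<cdot>\<^sub>m ?D"
  proof (rule eq_matI)
    fix i j
    assume "i < dim_row (s \<cdot>\<^sub>m ?D)" "j < dim_col (s \<cdot>\<^sub>m ?D)"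
    then have ij: "i < n" "j < n"
      by auto
    show "(?D * J) $$ (i, j) = (s \<cdot>\<^sub>m ?D) $$ (i, j)"
      unfolding index_mult_diagonal[OF D(1) J(2) D(2) J(1) ij] using ij by (simp add: diag_indicator_def)
  qed (use J in auto)
  show "?D * ?D = ?D"
  proof (rule eq_matI)
    fix i j
    assume "i < dim_row ?D" "j < dim_col ?D"
    then have ij: "i < n" "j < n"
      by auto
    show "(?D * ?D) $$ (i, j) = ?D $$ (i, j)"
      unfolding index_mult_diagonal[OF D(1) D(1) D(2) D(2) ij] using ij by (simp add: diag_indicator_def)
  qed auto
qed

text \<open>Given \<sigma> = P J Q with J diagonal, the spectral projector of \<sigma> for s is P D Q, where
  D = diag_indicator n J s keeps the diagonal positions of J carrying the value s.\<close>

context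
  fixes n :: nat and \<sigma> P Q J :: "complex mat"
  assumes \<sigma>: "\<sigma> \<in> carrier_mat n n" and \<sigma>_adj: "mat_adjoint \<sigma> = \<sigma>"
    and P: "P \<in> carrier_mat n n" and Q: "Q \<in> carrier_mat n n" and J: "J \<in> carrier_mat n n"
    and PQ: "P * Q = 1\<^sub>m n" and QP: "Q * P = 1\<^sub>m n" and \<sigma>_eq: "\<sigma> = P * J * Q"
    and J_diag: "diagonal_mat J"
begin

abbreviation eig_proj :: "complex \<Rightarrow> complex mat" where
  "eig_proj s \<equiv> P * diag_indicator n J s * Q"

abbreviation eigs :: "complex set" where
  "eigs \<equiv> (\<lambda>i. J $$ (i, i)) ` {..<n}"

lemma eig_proj_carrier: "eig_proj s \<in> carrier_mat n n"
  using P Q by (meson mult_carrier_mat diag_indicator_carrier)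

lemma index_eig_proj:
  "i < n \<Longrightarrow> j < n \<Longrightarrow>
   eig_proj s $$ (i, j) = (\<Sum>a<n. if J $$ (a, a) = s then P $$ (i, a) * Q $$ (a, j) else 0)"
  by (subst index_mult_diagonal_mult[OF P _ Q diagonal_diag_indicator])
    (auto simp: diag_indicator_def intro!: sum.cong)

lemma index_sigma:
  "i < n \<Longrightarrow> j < n \<Longrightarrow> \<sigma> $$ (i, j) = (\<Sum>a<n. J $$ (a, a) * (P $$ (i, a) * Q $$ (a, j)))"
  unfolding \<sigma>_eq by (subst index_mult_diagonal_mult[OF P J Q J_diag]) (auto intro!: sum.cong)

lemma sum_eig_proj_index:
  assumes "i < n" "j < n"
  shows "(\<Sum>s\<in>eigs. eig_proj s $$ (i, j)) = (if i = j then 1 else 0)"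
proof -
  have "(\<Sum>s\<in>eigs. eig_proj s $$ (i, j)) =
      (\<Sum>s\<in>eigs. \<Sum>a<n. if J $$ (a, a) = s then P $$ (i, a) * Q $$ (a, j) else 0)"
    using assms by (simp add: index_eig_proj)
  also have "\<dots> = (\<Sum>a<n. \<Sum>s\<in>eigs. if J $$ (a, a) = s then P $$ (i, a) * Q $$ (a, j) else 0)"
    by (rule sum.swap)
  also have "\<dots> = (\<Sum>a<n. P $$ (i, a) * Q $$ (a, j))"
    by (intro sum.cong refl) (simp add: sum.delta')
  also have "\<dots> = (P * Q) $$ (i, j)"
    using assms P Q by (intro index_mult_mat_sum[symmetric]) auto
  finally show ?thesis
    using PQ assms by simp
qed

lemma sum_eigs_eig_proj_index:
  assumes "i < n" "j < n"
  shows "(\<Sum>s\<in>eigs. s * eig_proj s $$ (i, j)) = \<sigma> $$ (i, j)"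
proof -
  have "(\<Sum>s\<in>eigs. s * eig_proj s $$ (i, j)) =
      (\<Sum>s\<in>eigs. \<Sum>a<n. if J $$ (a, a) = s then J $$ (a, a) * (P $$ (i, a) * Q $$ (a, j)) else 0)"
    using assms by (intro sum.cong) (auto simp: index_eig_proj sum_distrib_left intro!: sum.cong)
  also have "\<dots> = (\<Sum>a<n. \<Sum>s\<in>eigs.
      if J $$ (a, a) = s then J $$ (a, a) * (P $$ (i, a) * Q $$ (a, j)) else 0)"
    by (rule sum.swap)
  also have "\<dots> = (\<Sum>a<n. J $$ (a, a) * (P $$ (i, a) * Q $$ (a, j)))"
    by (intro sum.cong refl) (simp add: sum.delta')
  finally show ?thesis
    using index_sigma assms by simp
qed

lemma vec_eq_sum_eig_proj:
  assumes v: "v \<in> carrier_vec n" and i: "i < n"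
  shows "v $ i = (\<Sum>t\<in>eigs. (eig_proj t *\<^sub>v v) $ i)"
proof -
  have "(\<Sum>t\<in>eigs. (eig_proj t *\<^sub>v v) $ i) = (\<Sum>t\<in>eigs. \<Sum>c<n. eig_proj t $$ (i, c) * v $ c)"
    using eig_proj_carrier v i by (intro sum.cong refl index_mult_mat_vec_sum) auto
  also have "\<dots> = (\<Sum>c<n. (\<Sum>t\<in>eigs. eig_proj t $$ (i, c)) * v $ c)"
    by (subst sum.swap) (simp add: sum_distrib_right)
  also have "\<dots> = (\<Sum>c<n. if c = i then v $ c else 0)"
    using i by (intro sum.cong refl) (auto simp: sum_eig_proj_index)
  finally show ?thesis
    using i by simp
qed

lemma sigma_mult_eig_proj:
  "\<sigma> * eig_proj s = s \<cdot>\<^sub>m eig_proj s" "eig_proj s * \<sigma> = s \<cdot>\<^sub>m eig_proj s"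
  "eig_proj s * eig_proj s = eig_proj s"
proof -
  note DJ = diagonal_mult_diag_indicator[OF J J_diag]
  note smult = mult_smult_distrib[of _ n n _ n] mult_smult_assoc_mat[of _ n n _ n]
  have "\<sigma> * eig_proj s = P * (J * diag_indicator n J s) * Q"
    unfolding \<sigma>_eq by (rule mult_similar_mult_similar[OF P Q J diag_indicator_carrier QP])
  then show "\<sigma> * eig_proj s = s \<cdot>\<^sub>m eig_proj s"
    using P Q by (simp add: DJ smult)
  have "eig_proj s * \<sigma> = P * (diag_indicator n J s * J) * Q"
    unfolding \<sigma>_eq by (rule mult_similar_mult_similar[OF P Q diag_indicator_carrier J QP])
  then show "eig_proj s * \<sigma> = s \<cdot>\<^sub>m eig_proj s"
    using P Q by (simp add: DJ smult)
  have "eig_proj s * eig_proj s = P * (diag_indicator n J s * diag_indicator n J s) * Q"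
    by (rule mult_similar_mult_similar[OF P Q diag_indicator_carrier diag_indicator_carrier QP])
  then show "eig_proj s * eig_proj s = eig_proj s"
    by (simp add: DJ)
qed

lemma eigenvector_col:
  assumes j: "j < n"
  shows "eigenvector \<sigma> (col P j) (J $$ (j, j))"
proof -
  have "\<sigma> * P = P * J"
    using P Q J QP unfolding \<sigma>_eq by (simp add: assoc_mult_mat[of _ n n _ n _ n])
  have "\<sigma> *\<^sub>v col P j = J $$ (j, j) \<cdot>\<^sub>v col P j"
  proof (rule eq_vecI)
    fix i
    assume "i < dim_vec (J $$ (j, j) \<cdot>\<^sub>v col P j)"
    then have i: "i < n"
      using P by simp
    have "(\<sigma> *\<^sub>v col P j) $ i = (P * J) $$ (i, j)"
      using i j \<sigma> P \<open>\<sigma> * P = P * J\<close>[symmetric] by simp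
    also have "\<dots> = (\<Sum>c<n. P $$ (i, c) * J $$ (c, j))"
      using i j P J by (intro index_mult_mat_sum) auto
    also have "\<dots> = (\<Sum>c<n. if c = j then P $$ (i, c) * J $$ (c, j) else 0)"
      using j J J_diag by (intro sum.cong) (auto simp: diagonal_mat_def)
    also have "\<dots> = P $$ (i, j) * J $$ (j, j)"
      using j by simp
    finally show "(\<sigma> *\<^sub>v col P j) $ i = (J $$ (j, j) \<cdot>\<^sub>v col P j) $ i"
      using i j P by simp
  qed (use \<sigma> P in auto)
  moreover have "col P j \<noteq> 0\<^sub>v n"
  proof
    assume "col P j = 0\<^sub>v n"
    then have "(Q * P) $$ (j, j) = 0"
      using j P Q by simp
    then show False
      using QP j by simp
  qed
  ultimately show ?thesis
    unfolding eigenvector_def using \<sigma> P by (simp add: carrier_vecI)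
qed

lemma eigs_is_eigenvalue: "s \<in> eigs \<Longrightarrow> is_eigenvalue n \<sigma> s"
  using eigenvector_col \<sigma> unfolding is_eigenvalue_def eigenvector_def by fastforce

lemma eigs_real: "s \<in> eigs \<Longrightarrow> conjugate s = s"
  using eigenvector_col hermitian_eigenvalue_real[OF \<sigma> \<sigma>_adj] \<sigma>
  unfolding eigenvector_def by fastforce

lemma index_eq_sum_mult_eig_proj:
  assumes "M \<in> carrier_mat n n" "i < n" "j < n"
  shows "M $$ (i, j) = (\<Sum>t\<in>eigs. (M * eig_proj t) $$ (i, j))"
proof -
  have "(\<Sum>t\<in>eigs. (M * eig_proj t) $$ (i, j)) = (\<Sum>t\<in>eigs. \<Sum>c<n. M $$ (i, c) * eig_proj t $$ (c, j))"
    using assms eig_proj_carrier by (intro sum.cong refl index_mult_mat_sum) auto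
  also have "\<dots> = (\<Sum>c<n. M $$ (i, c) * (\<Sum>t\<in>eigs. eig_proj t $$ (c, j)))"
    by (subst sum.swap) (simp add: sum_distrib_left)
  also have "\<dots> = (\<Sum>c<n. if c = j then M $$ (i, c) else 0)"
    using assms by (intro sum.cong refl) (auto simp: sum_eig_proj_index)
  finally show ?thesis
    using assms by simp
qed

text \<open>X = (eig_proj s)^H satisfies X \<sigma> = s X, so X annihilates eig_proj t for t \<noteq> s; by the
  resolution of the identity X = X eig_proj s, and the adjoint of this equation is
  eig_proj s = (eig_proj s)^H X^H = X eig_proj s = X.\<close>

lemma eig_proj_self_adjoint:
  assumes s: "s \<in> eigs"
  shows "mat_adjoint (eig_proj s) = eig_proj s"
proof -
  define X where "X = mat_adjoint (eig_proj s)"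
  have X: "X \<in> carrier_mat n n"
    using eig_proj_carrier by (simp add: X_def)
  have "X * \<sigma> = mat_adjoint (\<sigma> * eig_proj s)"
    unfolding X_def using adjoint_mult[OF \<sigma> eig_proj_carrier] \<sigma>_adj by simp
  also have "\<dots> = s \<cdot>\<^sub>m X"
    unfolding sigma_mult_eig_proj X_def adjoint_smult using eigs_real[OF s] by simp
  finally have X\<sigma>: "X * \<sigma> = s \<cdot>\<^sub>m X" .
  have XE: "X * eig_proj t = 0\<^sub>m n n" if t: "t \<noteq> s" for t
  proof -
    have "(X * \<sigma>) * eig_proj t = X * (\<sigma> * eig_proj t)"
      using X \<sigma> eig_proj_carrier by (intro assoc_mult_mat[of _ n n _ n _ n]) auto
    then have "s \<cdot>\<^sub>m (X * eig_proj t) = t \<cdot>\<^sub>m (X * eig_proj t)"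
      unfolding X\<sigma> sigma_mult_eig_proj using X eig_proj_carrier
      by (simp add: mult_smult_distrib[of _ n n _ n] mult_smult_assoc_mat[of _ n n _ n])
    then show ?thesis
      using t X eig_proj_carrier by (intro smult_mat_cancel) auto
  qed
  have XX: "X = X * eig_proj s"
  proof (rule eq_matI)
    fix i j
    assume "i < dim_row (X * eig_proj s)" "j < dim_col (X * eig_proj s)"
    then have ij: "i < n" "j < n"
      using X eig_proj_carrier[of s] by auto
    have "X $$ (i, j) = (\<Sum>t\<in>eigs. (X * eig_proj t) $$ (i, j))"
      using index_eq_sum_mult_eig_proj[OF X ij] .
    also have "\<dots> = (\<Sum>t\<in>eigs. if t = s then (X * eig_proj s) $$ (i, j) else 0)"
      using XE ij by (intro sum.cong refl) auto
    also have "\<dots> = (X * eig_proj s) $$ (i, j)"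
      using s by simp
    finally show "X $$ (i, j) = (X * eig_proj s) $$ (i, j)" .
  qed (use X eig_proj_carrier Q in auto)
  have "eig_proj s = mat_adjoint (X * eig_proj s)"
    using XX by (simp add: X_def)
  also have "\<dots> = X * eig_proj s"
    using adjoint_mult[OF X eig_proj_carrier] by (simp add: X_def)
  also have "\<dots> = X"
    using XX by simp
  finally show ?thesis
    unfolding X_def by simp
qed

lemma eig_proj_mult_eigenvector:
  assumes v: "v \<in> carrier_vec n" and ev: "\<sigma> *\<^sub>v v = s \<cdot>\<^sub>v v" and ts: "t \<noteq> s"
  shows "eig_proj t *\<^sub>v v = 0\<^sub>v n"
proof -
  define w where "w = eig_proj t *\<^sub>v v"
  have w: "w \<in> carrier_vec n"
    using eig_proj_carrier[of t] v by (simp add: w_def)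
  have "t \<cdot>\<^sub>v w = (eig_proj t * \<sigma>) *\<^sub>v v"
    unfolding sigma_mult_eig_proj w_def using eig_proj_carrier v by (intro smult_mult_mat_vec[symmetric]) auto
  also have "\<dots> = eig_proj t *\<^sub>v (\<sigma> *\<^sub>v v)"
    using eig_proj_carrier \<sigma> v by (intro assoc_mult_mat_vec) auto
  also have "\<dots> = s \<cdot>\<^sub>v w"
    unfolding ev w_def using eig_proj_carrier v by (intro mult_mat_vec) auto
  finally have tsw: "t \<cdot>\<^sub>v w = s \<cdot>\<^sub>v w" .
  show ?thesis
    unfolding w_def[symmetric]
  proof (rule eq_vecI)
    fix i
    assume "i < dim_vec (0\<^sub>v n :: complex vec)"
    then have "t * w $ i = s * w $ i"
      using arg_cong[OF tsw, of "\<lambda>x. x $ i"] w by simp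
    then show "w $ i = 0\<^sub>v n $ i"
      using ts \<open>i < _\<close> by simp
  qed (use w in auto)
qed

lemma spectral_proj_eig_proj:
  assumes s: "s \<in> eigs"
  shows "spectral_proj n \<sigma> s (eig_proj s)"
  unfolding spectral_proj_def
proof (intro conjI ballI)
  show "is_eigenvalue n \<sigma> s"
    using eigs_is_eigenvalue[OF s] .
  show "self_adjoint n (eig_proj s)"
    unfolding self_adjoint_def using eig_proj_carrier eig_proj_self_adjoint[OF s] by simp
  show "eig_proj s * eig_proj s = eig_proj s"
    by (rule sigma_mult_eig_proj)
  fix v :: "complex vec"
  assume v: "v \<in> carrier_vec n"
  show "eig_proj s *\<^sub>v v = v \<longleftrightarrow> \<sigma> *\<^sub>v v = s \<cdot>\<^sub>v v"
  proof
    assume Ev: "eig_proj s *\<^sub>v v = v"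
    have "\<sigma> *\<^sub>v (eig_proj s *\<^sub>v v) = (\<sigma> * eig_proj s) *\<^sub>v v"
      using \<sigma> eig_proj_carrier v by (intro assoc_mult_mat_vec[symmetric]) auto
    also have "\<dots> = s \<cdot>\<^sub>v (eig_proj s *\<^sub>v v)"
      unfolding sigma_mult_eig_proj using eig_proj_carrier v by (intro smult_mult_mat_vec) auto
    finally show "\<sigma> *\<^sub>v v = s \<cdot>\<^sub>v v"
      using Ev by simp
  next
    assume ev: "\<sigma> *\<^sub>v v = s \<cdot>\<^sub>v v"
    show "eig_proj s *\<^sub>v v = v"
    proof (rule eq_vecI)
      fix i
      assume "i < dim_vec v"
      then have i: "i < n"
        using v by simp
      have "v $ i = (\<Sum>t\<in>eigs. (eig_proj t *\<^sub>v v) $ i)"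
        by (rule vec_eq_sum_eig_proj[OF v i])
      also have "\<dots> = (\<Sum>t\<in>eigs. if t = s then (eig_proj s *\<^sub>v v) $ i else 0)"
        using eig_proj_mult_eigenvector[OF v ev] i by (intro sum.cong refl) auto
      also have "\<dots> = (eig_proj s *\<^sub>v v) $ i"
        using s by simp
      finally show "(eig_proj s *\<^sub>v v) $ i = v $ i"
        by simp
    qed (use P v in auto)
  qed
qed

lemma is_eigenvalue_imp_eigs:
  assumes "is_eigenvalue n \<sigma> s"
  shows "s \<in> eigs"
proof (rule ccontr)
  assume s: "s \<notin> eigs"
  obtain v where v: "v \<in> carrier_vec n" "v \<noteq> 0\<^sub>v n" "\<sigma> *\<^sub>v v = s \<cdot>\<^sub>v v"
    using assms unfolding is_eigenvalue_def by blast
  have "v = 0\<^sub>v n"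
  proof (rule eq_vecI)
    fix i
    assume "i < dim_vec (0\<^sub>v n :: complex vec)"
    then have i: "i < n"
      by simp
    have "eig_proj t *\<^sub>v v = 0\<^sub>v n" if "t \<in> eigs" for t
    proof -
      have "t \<noteq> s"
        using that s by blast
      then show ?thesis
        by (rule eig_proj_mult_eigenvector[OF v(1,3)])
    qed
    then show "v $ i = 0\<^sub>v n $ i"
      using vec_eq_sum_eig_proj[OF v(1) i] i by simp
  qed (use v in auto)
  then show False
    using v by simp
qed

lemma eig_proj_rank_one:
  assumes nd: "nondegenerate n \<sigma>" and s: "s \<in> eigs"
  shows "\<exists>p q. \<forall>i<n. \<forall>j<n. eig_proj s $$ (i, j) = p i * q j"
proof -
  have "{s. is_eigenvalue n \<sigma> s} = eigs"
    using is_eigenvalue_imp_eigs eigs_is_eigenvalue by blast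
  then have "card eigs = card {..<n}"
    using nd unfolding nondegenerate_def by simp
  then have inj: "inj_on (\<lambda>i. J $$ (i, i)) {..<n}"
    by (intro eq_card_imp_inj_on) auto
  obtain j0 where j0: "j0 < n" "s = J $$ (j0, j0)"
    using s by auto
  have "eig_proj s $$ (i, j) = P $$ (i, j0) * Q $$ (j0, j)" if ij: "i < n" "j < n" for i j
  proof -
    have "eig_proj s $$ (i, j) = (\<Sum>a<n. if a = j0 then P $$ (i, a) * Q $$ (a, j) else 0)"
      unfolding index_eig_proj[OF ij] using inj j0 by (intro sum.cong refl) (auto dest: inj_onD)
    then show ?thesis
      using j0 by simp
  qed
  then show ?thesis
    by (intro exI[of _ "\<lambda>i. P $$ (i, j0)"] exI[of _ "\<lambda>j. Q $$ (j0, j)"]) auto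
qed

end

lemma spectral_proj_carrier: "spectral_proj n \<sigma> s E \<Longrightarrow> E \<in> carrier_mat n n"
  by (simp add: spectral_proj_def self_adjoint_def)

lemma hermitian_spectral_decomposition:
  fixes \<sigma> :: "complex mat"
  assumes "self_adjoint n \<sigma>"
  obtains S :: "complex set" and E where "finite S"
    "\<And>s. s \<in> S \<Longrightarrow> spectral_proj n \<sigma> s (E s)"
    "\<And>i j. i < n \<Longrightarrow> j < n \<Longrightarrow> (\<Sum>s\<in>S. s * E s $$ (i, j)) = \<sigma> $$ (i, j)"
    "\<And>i j. i < n \<Longrightarrow> j < n \<Longrightarrow> (\<Sum>s\<in>S. E s $$ (i, j)) = (if i = j then 1 else 0)"
    "nondegenerate n \<sigma> \<Longrightarrow> \<forall>s\<in>S. \<exists>p q. \<forall>i<n. \<forall>j<n. E s $$ (i, j) = p i * q j"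
proof -
  have \<sigma>: "\<sigma> \<in> carrier_mat n n" and H: "mat_adjoint \<sigma> = \<sigma>"
    using assms unfolding self_adjoint_def by auto
  obtain P Q J where PQJ: "P \<in> carrier_mat n n" "Q \<in> carrier_mat n n" "J \<in> carrier_mat n n"
    "P * Q = 1\<^sub>m n" "Q * P = 1\<^sub>m n" "\<sigma> = P * J * Q" "diagonal_mat J"
    using hermitian_diagonalizable[OF \<sigma> H] by blast
  show ?thesis
    by (rule that[of "(\<lambda>i. J $$ (i, i)) ` {..<n}" "\<lambda>s. P * diag_indicator n J s * Q"])
      (use spectral_proj_eig_proj[OF \<sigma> H PQJ] sum_eigs_eig_proj_index[OF \<sigma> H PQJ]
        sum_eig_proj_index[OF \<sigma> H PQJ] eig_proj_rank_one[OF \<sigma> H PQJ] in auto)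
qed

section \<open>Positive semidefinite matrices\<close>

definition psd :: "nat \<Rightarrow> complex mat \<Rightarrow> bool" where
  "psd N \<rho> \<longleftrightarrow> (\<forall>v \<in> carrier_vec N.
     Im (conjugate v \<bullet> (\<rho> *\<^sub>v v)) = 0 \<and> Re (conjugate v \<bullet> (\<rho> *\<^sub>v v)) \<ge> 0)"

lemma density_op_psd: "density_op N \<rho> \<Longrightarrow> psd N \<rho>"
  by (simp add: density_op_def psd_def)

lemma quadratic_form_add_smult:
  fixes A :: "complex mat"
  assumes A: "A \<in> carrier_mat N N" and v: "v \<in> carrier_vec N" and w: "w \<in> carrier_vec N"
  shows "conjugate (v + c \<cdot>\<^sub>v w) \<bullet> (A *\<^sub>v (v + c \<cdot>\<^sub>v w)) =
    conjugate v \<bullet> (A *\<^sub>v v) + c * (conjugate v \<bullet> (A *\<^sub>v w)) +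
    conjugate c * (conjugate w \<bullet> (A *\<^sub>v v)) + conjugate c * c * (conjugate w \<bullet> (A *\<^sub>v w))"
proof -
  have Av: "A *\<^sub>v v \<in> carrier_vec N" "A *\<^sub>v w \<in> carrier_vec N"
    using A v w by auto
  have cv: "conjugate v \<in> carrier_vec N" "conjugate w \<in> carrier_vec N"
    using v w by auto
  have "A *\<^sub>v (v + c \<cdot>\<^sub>v w) = A *\<^sub>v v + c \<cdot>\<^sub>v (A *\<^sub>v w)"
    using A v w by (simp add: mult_add_distrib_mat_vec[OF A] mult_mat_vec[OF A])
  moreover have "conjugate (v + c \<cdot>\<^sub>v w) = conjugate v + conjugate c \<cdot>\<^sub>v conjugate w"
    using v w by (simp add: conjugate_add_vec conjugate_smult_vec)
  moreover have "(conjugate v + conjugate c \<cdot>\<^sub>v conjugate w) \<bullet> (A *\<^sub>v v + c \<cdot>\<^sub>v (A *\<^sub>v w)) =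
      conjugate v \<bullet> (A *\<^sub>v v) + conjugate v \<bullet> (c \<cdot>\<^sub>v (A *\<^sub>v w)) +
      ((conjugate c \<cdot>\<^sub>v conjugate w) \<bullet> (A *\<^sub>v v) + (conjugate c \<cdot>\<^sub>v conjugate w) \<bullet> (c \<cdot>\<^sub>v (A *\<^sub>v w)))"
    using Av cv by (simp add: add_scalar_prod_distrib[of _ N] scalar_prod_add_distrib[of _ N])
  ultimately show ?thesis
    using Av cv by (simp add: scalar_prod_smult_distrib smult_scalar_prod_distrib mult.assoc)
qed

lemma quadratic_nonneg_imp_linear_coeff_eq_0:
  fixes c \<alpha> :: real
  assumes "\<forall>r. 0 \<le> r * r * \<alpha> - 2 * r * c" "0 \<le> c" "0 \<le> \<alpha>"
  shows "c = 0"
proof (rule ccontr)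
  assume "c \<noteq> 0"
  then have "0 < c"
    using assms(2) by simp
  define r where "r = c / (\<alpha> + 1)"
  have "0 \<le> r * r * \<alpha> - 2 * r * c"
    using assms(1) by blast
  moreover have "r * r * \<alpha> - 2 * r * c = - (c * c * (\<alpha> + 2) / ((\<alpha> + 1) * (\<alpha> + 1)))"
    using assms(3) unfolding r_def
    by (simp add: field_simps add_pos_nonneg[of 1, THEN less_imp_neq, symmetric] add.commute)
  moreover have "c * c * (\<alpha> + 2) / ((\<alpha> + 1) * (\<alpha> + 1)) > 0"
    using \<open>0 < c\<close> assms(3) by simp
  ultimately show False
    by linarith
qed

text \<open>If <v, \<rho> v> = 0 and w = \<rho> v, then <v - r w, \<rho> (v - r w)> = r^2 <w, \<rho> w> - 2 r |w|^2,
  which is negative for small r > 0 unless w = 0.\<close>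

lemma psd_isotropic_imp_kernel:
  fixes \<rho> :: "complex mat"
  assumes R: "\<rho> \<in> carrier_mat N N" and H: "mat_adjoint \<rho> = \<rho>" and P: "psd N \<rho>"
    and v: "v \<in> carrier_vec N" and z: "conjugate v \<bullet> (\<rho> *\<^sub>v v) = 0"
  shows "\<rho> *\<^sub>v v = 0\<^sub>v N"
proof -
  define w where "w = \<rho> *\<^sub>v v"
  have w: "w \<in> carrier_vec N"
    using R v by (simp add: w_def)
  define c where "c = conjugate w \<bullet> w"
  define \<alpha> where "\<alpha> = conjugate w \<bullet> (\<rho> *\<^sub>v w)"
  have vw: "conjugate v \<bullet> (\<rho> *\<^sub>v w) = c"
    using sprod_mult_mat_vec_adjoint[OF R v w] H unfolding c_def w_def by simp
  have c: "Im c = 0" "Re c \<ge> 0"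
    using conjugate_sprod_self_nonneg[OF w] by (auto simp: c_def)
  have \<alpha>: "Im \<alpha> = 0" "Re \<alpha> \<ge> 0"
    using P w unfolding psd_def \<alpha>_def by auto
  have q: "Re (conjugate (v + (- of_real r) \<cdot>\<^sub>v w) \<bullet> (\<rho> *\<^sub>v (v + (- of_real r) \<cdot>\<^sub>v w))) =
      r * r * Re \<alpha> - 2 * r * Re c" for r :: real
  proof -
    have "conjugate v \<bullet> w = 0"
      using z by (simp add: w_def)
    then show ?thesis
      using c unfolding quadratic_form_add_smult[OF R v w]
      by (simp add: vw w_def[symmetric] c_def[symmetric] \<alpha>_def[symmetric])
  qed
  have "\<forall>r. 0 \<le> r * r * Re \<alpha> - 2 * r * Re c"
    using P v w unfolding psd_def q[symmetric] by auto
  then have "Re c = 0"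
    using c \<alpha> by (intro quadratic_nonneg_imp_linear_coeff_eq_0[where \<alpha> = "Re \<alpha>"]) auto
  then have "c = 0"
    using c by (simp add: complex_eq_iff)
  then show ?thesis
    using conjugate_sprod_self_eq_0[OF w] unfolding c_def w_def by simp
qed

lemma mtrace_proj_mult_eq_sum:
  fixes E \<rho> :: "complex mat"
  assumes R: "\<rho> \<in> carrier_mat N N" and E: "E \<in> carrier_mat N N" "mat_adjoint E = E" "E * E = E"
  shows "mtrace (E * \<rho>) = (\<Sum>i<N. conjugate (col E i) \<bullet> (\<rho> *\<^sub>v col E i))"
proof -
  have "mtrace (E * \<rho>) = mtrace (E * (E * \<rho>))"
    using E R by (simp add: assoc_mult_mat[of _ N N _ N _ N, symmetric])
  also have "\<dots> = mtrace ((E * \<rho>) * E)"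
    using E R by (intro mtrace_mult_comm) auto
  also have "\<dots> = mtrace (E * (\<rho> * E))"
    using E R by (simp add: assoc_mult_mat[of _ N N _ N _ N])
  also have "\<dots> = (\<Sum>i<N. conjugate (col E i) \<bullet> (\<rho> *\<^sub>v col E i))"
  proof -
    have "(E * (\<rho> * E)) $$ (i, i) = conjugate (col E i) \<bullet> (\<rho> *\<^sub>v col E i)" if i: "i < N" for i
    proof -
      have "(E * (\<rho> * E)) $$ (i, i) = (\<Sum>j<N. E $$ (i, j) * (\<rho> * E) $$ (j, i))"
        using E R i by (intro index_mult_mat_sum) auto
      also have "\<dots> = (\<Sum>j<N. conjugate (col E i) $ j * (\<rho> *\<^sub>v col E i) $ j)"
        using E R i by (intro sum.cong refl) (auto simp: self_adjoint_index)
      also have "\<dots> = conjugate (col E i) \<bullet> (\<rho> *\<^sub>v col E i)"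
        using E R by (simp add: scalar_prod_def atLeast0LessThan)
      finally show ?thesis .
    qed
    then show ?thesis
      unfolding mtrace_def using E R by (auto intro!: sum.cong)
  qed
  finally show ?thesis .
qed

lemma proj_mult_psd_eq_0:
  fixes E \<rho> :: "complex mat"
  assumes R: "\<rho> \<in> carrier_mat N N" "mat_adjoint \<rho> = \<rho>" "psd N \<rho>"
    and E: "E \<in> carrier_mat N N" "mat_adjoint E = E" "E * E = E"
    and tr: "mtrace (E * \<rho>) = 0"
  shows "E * \<rho> = 0\<^sub>m N N"
proof -
  define q where "q i = conjugate (col E i) \<bullet> (\<rho> *\<^sub>v col E i)" for i
  have col: "col E i \<in> carrier_vec N" for i
    using E unfolding carrier_vec_def by simp
  have q_nonneg: "Im (q i) = 0" "Re (q i) \<ge> 0" for i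
    using R(3) col[of i] unfolding psd_def q_def by auto
  have "(\<Sum>i<N. q i) = 0"
    using tr mtrace_proj_mult_eq_sum[OF R(1) E] by (simp add: q_def)
  then have "(\<Sum>i<N. Re (q i)) = 0"
    by (metis Re_sum zero_complex.sel(1))
  then have "Re (q i) = 0" if "i < N" for i
    using q_nonneg that by (simp add: sum_nonneg_eq_0_iff)
  then have "\<rho> *\<^sub>v col E i = 0\<^sub>v N" if "i < N" for i
    using psd_isotropic_imp_kernel[OF R col] q_nonneg that unfolding q_def by (simp add: complex_eq_iff)
  then have \<rho>E: "\<rho> * E = 0\<^sub>m N N"
  proof (intro eq_matI)
    fix i j
    assume ij: "i < dim_row (0\<^sub>m N N :: complex mat)" "j < dim_col (0\<^sub>m N N :: complex mat)"
    then have "(\<rho> * E) $$ (i, j) = (\<rho> *\<^sub>v col E j) $ i"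
      using R E by simp
    then show "(\<rho> * E) $$ (i, j) = 0\<^sub>m N N $$ (i, j)"
      using \<open>\<And>i. i < N \<Longrightarrow> \<rho> *\<^sub>v col E i = 0\<^sub>v N\<close> ij by simp
  qed (use R E in auto)
  have "E * \<rho> = mat_adjoint (\<rho> * E)"
    using adjoint_mult[OF R(1) E(1)] R(2) E(2) by simp
  also have "\<dots> = 0\<^sub>m N N"
    unfolding \<rho>E by (rule eq_matI) auto
  finally show ?thesis .
qed

section \<open>Consensus notions\<close>

lemma mtrace_emb_mult_linear:
  assumes "0 < n" "\<rho> \<in> carrier_mat (n ^ m) (n ^ m)"
    and decomp: "\<And>i j. i < n \<Longrightarrow> j < n \<Longrightarrow> (\<Sum>s\<in>S. s * E s $$ (i, j)) = \<sigma> $$ (i, j)"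
  shows "mtrace (emb n m k \<sigma> * \<rho>) = (\<Sum>s\<in>S. s * mtrace (emb n m k (E s) * \<rho>))"
proof -
  let ?t = "\<lambda>X a b. if digits_agree n m {k} a b then X $$ (dig n k a, dig n k b) * \<rho> $$ (b, a) else 0"
  have "mtrace (emb n m k \<sigma> * \<rho>) = (\<Sum>a<n ^ m. \<Sum>b<n ^ m. ?t \<sigma> a b)"
    by (rule mtrace_emb_mult[OF assms(2)])
  also have "\<dots> = (\<Sum>a<n ^ m. \<Sum>b<n ^ m. \<Sum>s\<in>S. s * ?t (E s) a b)"
    using assms(1) by (intro sum.cong refl) (auto simp: decomp[symmetric] dig_less sum_distrib_right mult.assoc)
  also have "\<dots> = (\<Sum>s\<in>S. s * (\<Sum>a<n ^ m. \<Sum>b<n ^ m. ?t (E s) a b))"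
    by (simp add: sum.swap[of _ S] sum_distrib_left)
  also have "\<dots> = (\<Sum>s\<in>S. s * mtrace (emb n m k (E s) * \<rho>))"
    by (simp add: mtrace_emb_mult[OF assms(2)])
  finally show ?thesis .
qed

lemma SMC_mtrace_emb_eq:
  assumes "0 < n" "SMC n m \<sigma> \<rho>" "spectral_proj n \<sigma> s E" "k < m" "l < m"
  shows "mtrace (emb n m k E * \<rho>) = mtrace (emb n m l E * \<rho>)"
proof (cases "k = l")
  case False
  note SMC = assms(2)[unfolded SMC_def, rule_format, OF assms(3)]
  have "mtrace (emb n m k E * \<rho>) = mtrace (emb n m l E * emb n m k E * \<rho>)"
    using SMC[OF assms(5,4)] by simp
  also have "\<dots> = mtrace (emb n m k E * emb n m l E * \<rho>)"
    using emb_mult_emb_commute[OF assms(1,4,5) False] spectral_proj_carrier[OF assms(3)] by simp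
  also have "\<dots> = mtrace (emb n m l E * \<rho>)"
    using SMC[OF assms(4,5)] .
  finally show ?thesis .
qed simp

lemma SMC_imp_EC:
  assumes "0 < n" "self_adjoint n \<sigma>" "\<rho> \<in> carrier_mat (n ^ m) (n ^ m)" "SMC n m \<sigma> \<rho>"
  shows "EC n m \<sigma> \<rho>"
  unfolding EC_def
proof (intro allI impI)
  obtain S :: "complex set" and E where
    proj: "\<And>s. s \<in> S \<Longrightarrow> spectral_proj n \<sigma> s (E s)" and
    decomp: "\<And>i j. i < n \<Longrightarrow> j < n \<Longrightarrow> (\<Sum>s\<in>S. s * E s $$ (i, j)) = \<sigma> $$ (i, j)"
    by (rule hermitian_spectral_decomposition[OF assms(2)]) blast
  note linear = mtrace_emb_mult_linear[OF assms(1,3) decomp]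
  fix k l
  assume kl: "k < m" "l < m"
  have "mtrace (emb n m k \<sigma> * \<rho>) = (\<Sum>s\<in>S. s * mtrace (emb n m k (E s) * \<rho>))"
    by (rule linear)
  also have "\<dots> = (\<Sum>s\<in>S. s * mtrace (emb n m l (E s) * \<rho>))"
    using SMC_mtrace_emb_eq[OF assms(1,4) proj kl] by (intro sum.cong refl) simp
  also have "\<dots> = mtrace (emb n m l \<sigma> * \<rho>)"
    by (rule linear[symmetric])
  finally show "mtrace (emb n m k \<sigma> * \<rho>) = mtrace (emb n m l \<sigma> * \<rho>)" .
qed

lemma SMC_emb_mult_emb_mult:
  assumes n: "0 < n" and \<rho>: "self_adjoint (n ^ m) \<rho>" "psd (n ^ m) \<rho>"
    and SMC: "SMC n m \<sigma> \<rho>" and E: "spectral_proj n \<sigma> s E" and kl: "k < m" "l < m"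
  shows "emb n m k E * emb n m l E * \<rho> = emb n m l E * \<rho>"
proof -
  let ?N = "n ^ m"
  have E_adj: "self_adjoint n E" and E_idem: "E * E = E" and E_carrier: "E \<in> carrier_mat n n"
    using E spectral_proj_carrier[OF E] unfolding spectral_proj_def by auto
  have \<rho>_carrier: "\<rho> \<in> carrier_mat ?N ?N" and \<rho>_adj: "mat_adjoint \<rho> = \<rho>"
    using \<rho>(1) unfolding self_adjoint_def by auto
  show ?thesis
  proof (cases "k = l")
    case True
    then show ?thesis
      using emb_mult_emb_same[OF n kl(1) E_carrier E_carrier] E_idem by simp
  next
    case False
    define R where "R = emb_pair n m k l (1\<^sub>m n - E) E"
    note R = emb_pair_complement[OF n kl False E_adj E_idem, folded R_def]
    have R\<rho>: "R * \<rho> = emb n m l E * \<rho> - emb n m k E * emb n m l E * \<rho>"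
      unfolding R(1) using \<rho>_carrier by (intro minus_mult_distrib_mat[of _ ?N ?N]) auto
    have "mtrace (R * \<rho>) = 0"
      unfolding R\<rho> using \<rho>_carrier SMC[unfolded SMC_def, rule_format, OF E kl]
      by (subst mtrace_minus[of _ ?N]) auto
    then have "R * \<rho> = 0\<^sub>m ?N ?N"
      using proj_mult_psd_eq_0[OF \<rho>_carrier \<rho>_adj \<rho>(2) _ R(2,3)] by (simp add: R_def)
    show ?thesis
    proof (rule eq_matI)
      fix i j
      assume ij: "i < dim_row (emb n m l E * \<rho>)" "j < dim_col (emb n m l E * \<rho>)"
      then have "(R * \<rho>) $$ (i, j) = 0"
        using \<open>R * \<rho> = 0\<^sub>m ?N ?N\<close> \<rho>_carrier by simp
      then show "(emb n m k E * emb n m l E * \<rho>) $$ (i, j) = (emb n m l E * \<rho>) $$ (i, j)"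
        unfolding R\<rho> using ij \<rho>_carrier by simp
    qed (use \<rho>_carrier in auto)
  qed
qed

lemma perm_conj_comp:
  assumes n: "0 < n" and p: "p permutes {..<m}" and t: "t permutes {..<m}"
  shows "perm_conj n m (t \<circ> p) \<rho> = perm_conj n m p (perm_conj n m t \<rho>)"
proof (rule eq_matI)
  fix a b
  assume "a < dim_row (perm_conj n m p (perm_conj n m t \<rho>))"
    "b < dim_col (perm_conj n m p (perm_conj n m t \<rho>))"
  then have ab: "a < n ^ m" "b < n ^ m"
    by (auto simp: perm_conj_def)
  have inv: "inv_into UNIV (t \<circ> p) = inv_into UNIV p \<circ> inv_into UNIV t"
    using p t by (intro o_inv_distrib) (auto simp: permutes_bij)
  have "inv_into UNIV t j < m" if "j < m" for j
    using permutes_in_image[OF permutes_inv[OF t]] that by auto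
  then show "perm_conj n m (t \<circ> p) \<rho> $$ (a, b) = perm_conj n m p (perm_conj n m t \<rho>) $$ (a, b)"
    using ab by (simp add: perm_conj_def perm_idx_less[OF n] inv perm_idx_comp[OF n])
qed (auto simp: perm_conj_def)

lemma perm_conj_id: "0 < n \<Longrightarrow> \<rho> \<in> carrier_mat (n ^ m) (n ^ m) \<Longrightarrow> perm_conj n m id \<rho> = \<rho>"
  by (rule eq_matI) (auto simp: perm_conj_def perm_idx_id)

lemma SMC_swap_row_invariant:
  assumes n: "0 < n" and \<sigma>: "self_adjoint n \<sigma>" "nondegenerate n \<sigma>"
    and \<rho>: "self_adjoint (n ^ m) \<rho>" "psd (n ^ m) \<rho>" and SMC: "SMC n m \<sigma> \<rho>"
    and kl: "k < m" "l < m" "k \<noteq> l" and ab: "a < n ^ m" "b < n ^ m"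
  shows "\<rho> $$ (perm_idx n m (transpose k l) a, b) = \<rho> $$ (a, b)"
proof -
  let ?N = "n ^ m" and ?a' = "perm_idx n m (transpose k l) a"
  obtain S :: "complex set" and E where
    proj: "\<And>s. s \<in> S \<Longrightarrow> spectral_proj n \<sigma> s (E s)" and
    resolution: "\<And>i j. i < n \<Longrightarrow> j < n \<Longrightarrow> (\<Sum>s\<in>S. E s $$ (i, j)) = (if i = j then 1 else 0)" and
    rank_one: "nondegenerate n \<sigma> \<Longrightarrow> \<forall>s\<in>S. \<exists>p q. \<forall>i<n. \<forall>j<n. E s $$ (i, j) = p i * q j"
    by (rule hermitian_spectral_decomposition[OF \<sigma>(1)]) blast
  have \<rho>_carrier: "\<rho> \<in> carrier_mat ?N ?N"
    using \<rho>(1) by (simp add: self_adjoint_def)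
  have a': "?a' < ?N"
    using n by (rule perm_idx_less)
  have pair: "emb n m l (E s) * \<rho> = emb_pair n m k l (E s) (E s) * \<rho>" if "s \<in> S" for s
  proof -
    have "E s \<in> carrier_mat n n"
      using spectral_proj_carrier[OF proj[OF that]] .
    then have "emb_pair n m k l (E s) (E s) = emb n m k (E s) * emb n m l (E s)"
      using emb_mult_emb[OF n kl] by simp
    then show ?thesis
      using SMC_emb_mult_emb_mult[OF n \<rho> SMC proj[OF that] kl(1,2)] by simp
  qed
  have swap: "(emb_pair n m k l (E s) (E s) * \<rho>) $$ (?a', b) = (emb_pair n m k l (E s) (E s) * \<rho>) $$ (a, b)"
    if "s \<in> S" for s
  proof -
    have "\<exists>p q. \<forall>i<n. \<forall>j<n. E s $$ (i, j) = p i * q j"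
      using rank_one[OF \<sigma>(2)] that by simp
    then obtain p q where "\<forall>i<n. \<forall>j<n. E s $$ (i, j) = p i * q j"
      by blast
    then show ?thesis
      by (rule emb_pair_rank_one_mult_swap_row[OF n kl(1,2) ab \<rho>_carrier])
  qed
  have "\<rho> $$ (?a', b) = (\<Sum>s\<in>S. (emb n m l (E s) * \<rho>) $$ (?a', b))"
    using sum_emb_mult_index[OF n kl(2) \<rho>_carrier a' ab(2) resolution] by simp
  also have "\<dots> = (\<Sum>s\<in>S. (emb_pair n m k l (E s) (E s) * \<rho>) $$ (?a', b))"
    by (intro sum.cong refl) (simp only: pair)
  also have "\<dots> = (\<Sum>s\<in>S. (emb_pair n m k l (E s) (E s) * \<rho>) $$ (a, b))"
    by (intro sum.cong refl swap)
  also have "\<dots> = (\<Sum>s\<in>S. (emb n m l (E s) * \<rho>) $$ (a, b))"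
    by (intro sum.cong refl) (simp only: pair)
  also have "\<dots> = \<rho> $$ (a, b)"
    using sum_emb_mult_index[OF n kl(2) \<rho>_carrier ab resolution] .
  finally show ?thesis .
qed

lemma SMC_imp_perm_conj_transpose:
  assumes n: "0 < n" and \<sigma>: "self_adjoint n \<sigma>" "nondegenerate n \<sigma>"
    and \<rho>: "self_adjoint (n ^ m) \<rho>" "psd (n ^ m) \<rho>" and SMC: "SMC n m \<sigma> \<rho>"
    and kl: "k < m" "l < m"
  shows "perm_conj n m (transpose k l) \<rho> = \<rho>"
proof (cases "k = l")
  case True
  then show ?thesis
    using perm_conj_id[OF n] \<rho>(1) by (simp add: self_adjoint_def)
next
  case False
  let ?N = "n ^ m" and ?sw = "perm_idx n m (transpose k l)"
  note row = SMC_swap_row_invariant[OF n \<sigma> \<rho> SMC kl False]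
  have \<rho>_carrier: "\<rho> \<in> carrier_mat ?N ?N" and \<rho>_adj: "mat_adjoint \<rho> = \<rho>"
    using \<rho>(1) by (auto simp: self_adjoint_def)
  have col: "\<rho> $$ (a, ?sw b) = \<rho> $$ (a, b)" if ab: "a < ?N" "b < ?N" for a b
  proof -
    have "\<rho> $$ (a, ?sw b) = cnj (\<rho> $$ (?sw b, a))"
      using self_adjoint_index[OF \<rho>_adj \<rho>_carrier ab(1) perm_idx_less[OF n]] by simp
    also have "\<dots> = cnj (\<rho> $$ (b, a))"
      using row[OF ab(2,1)] by simp
    also have "\<dots> = \<rho> $$ (a, b)"
      using self_adjoint_index[OF \<rho>_adj \<rho>_carrier ab] .
    finally show ?thesis .
  qed
  show ?thesis
  proof (rule eq_matI)
    fix a b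
    assume "a < dim_row \<rho>" "b < dim_col \<rho>"
    then have ab: "a < ?N" "b < ?N"
      using \<rho>_carrier by auto
    then have "perm_conj n m (transpose k l) \<rho> $$ (a, b) = \<rho> $$ (?sw a, ?sw b)"
      by (simp add: perm_conj_def)
    also have "\<dots> = \<rho> $$ (a, ?sw b)"
      using row[OF ab(1) perm_idx_less[OF n]] .
    also have "\<dots> = \<rho> $$ (a, b)"
      using col[OF ab] .
    finally show "perm_conj n m (transpose k l) \<rho> $$ (a, b) = \<rho> $$ (a, b)" .
  qed (use \<rho>_carrier in \<open>auto simp: perm_conj_def\<close>)
qed

lemma SMC_imp_SSC:
  assumes n: "0 < n" and \<sigma>: "self_adjoint n \<sigma>" "nondegenerate n \<sigma>"
    and \<rho>: "self_adjoint (n ^ m) \<rho>" "psd (n ^ m) \<rho>" and SMC: "SMC n m \<sigma> \<rho>"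
  shows "SSC n m \<rho>"
  unfolding SSC_def
proof (intro allI impI)
  fix \<pi>
  assume "\<pi> permutes {..<m}"
  moreover have "finite {..<m}"
    by simp
  ultimately show "perm_conj n m \<pi> \<rho> = \<rho>"
  proof (induction rule: permutes_induct)
    case id
    then show ?case
      using perm_conj_id[OF n] \<rho>(1) unfolding id_def by (simp add: self_adjoint_def)
  next
    case (swap a b p)
    then have "perm_conj n m (transpose a b \<circ> p) \<rho> = perm_conj n m p (perm_conj n m (transpose a b) \<rho>)"
      by (intro perm_conj_comp[OF n]) (auto intro: permutes_swap_id)
    also have "perm_conj n m (transpose a b) \<rho> = \<rho>"
      using SMC_imp_perm_conj_transpose[OF n \<sigma> \<rho> SMC] swap by simp
    finally show ?case
      using swap by simp
  qed
qed

lemma ptrace_perm_conj_transpose: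
  assumes n: "0 < n" and kl: "k < m" "l < m"
  shows "ptrace n m k (perm_conj n m (transpose k l) \<rho>) = ptrace n m l \<rho>"
proof (rule eq_matI)
  let ?N = "n ^ m" and ?sw = "perm_idx n m (transpose k l)"
  have t: "transpose k l permutes {..<m}"
    using kl by (intro permutes_swap_id) auto
  have sw_less: "?sw a < ?N" for a
    using n by (rule perm_idx_less)
  have reindex: "(\<Sum>a<?N. f a) = (\<Sum>a<?N. f (?sw a))" for f :: "nat \<Rightarrow> complex"
    by (rule sum.reindex_bij_witness[of _ ?sw ?sw])
      (auto simp: perm_idx_transpose_involution[OF n kl] sw_less)
  have dig_sw: "dig n k (?sw a) = dig n l a" for a
    using dig_perm_idx[OF n kl(1)] by simp
  have agree_sw: "digits_agree n m {k} (?sw a) (?sw b) = digits_agree n m {l} a b" for a b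
    using digits_agree_perm_idx[OF n t] by simp
  have agree_off: "(\<forall>j<m. j \<noteq> i \<longrightarrow> dig n j a = dig n j b) = digits_agree n m {i} a b" for i a b
    by (simp add: digits_agree_def)
  fix x y
  assume "x < dim_row (ptrace n m l \<rho>)" "y < dim_col (ptrace n m l \<rho>)"
  then have xy: "x < n" "y < n"
    by (auto simp: ptrace_def)
  let ?F = "\<lambda>i M a b. if dig n i a = x \<and> dig n i b = y \<and> digits_agree n m {i} a b then M a b else 0"
  have "ptrace n m k (perm_conj n m (transpose k l) \<rho>) $$ (x, y) =
      (\<Sum>a<?N. \<Sum>b<?N. ?F k (\<lambda>a b. \<rho> $$ (?sw a, ?sw b)) a b)"
    using xy by (auto simp: ptrace_def perm_conj_def agree_off intro!: sum.cong)
  also have "\<dots> = (\<Sum>a<?N. \<Sum>b<?N. ?F k (\<lambda>a b. \<rho> $$ (?sw a, ?sw b)) (?sw a) b)"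
    by (rule reindex)
  also have "\<dots> = (\<Sum>a<?N. \<Sum>b<?N. ?F k (\<lambda>a b. \<rho> $$ (?sw a, ?sw b)) (?sw a) (?sw b))"
    by (rule sum.cong[OF refl]) (rule reindex)
  also have "\<dots> = (\<Sum>a<?N. \<Sum>b<?N. ?F l (\<lambda>a b. \<rho> $$ (a, b)) a b)"
    by (intro sum.cong refl) (simp add: dig_sw agree_sw perm_idx_transpose_involution[OF n kl])
  also have "\<dots> = ptrace n m l \<rho> $$ (x, y)"
    using xy by (simp add: ptrace_def agree_off)
  finally show "ptrace n m k (perm_conj n m (transpose k l) \<rho>) $$ (x, y) = ptrace n m l \<rho> $$ (x, y)" .
qed (simp_all add: ptrace_def)

lemma SSC_imp_RSC:
  assumes "0 < n" "SSC n m \<rho>"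
  shows "RSC n m \<rho>"
  unfolding RSC_def
proof (intro allI impI)
  fix k l
  assume kl: "k < m" "l < m"
  then have "perm_conj n m (transpose k l) \<rho> = \<rho>"
    using assms(2) unfolding SSC_def by (simp add: permutes_swap_id)
  then have "ptrace n m k \<rho> = ptrace n m k (perm_conj n m (transpose k l) \<rho>)"
    by simp
  also have "\<dots> = ptrace n m l \<rho>"
    by (rule ptrace_perm_conj_transpose[OF assms(1) kl])
  finally show "ptrace n m k \<rho> = ptrace n m l \<rho>" .
qed

section \<open>The counterexample\<close>

definition proj_ket1 :: "complex mat" where
  "proj_ket1 = mat 2 2 (\<lambda>(i, j). if i = j \<and> i = 1 then 1 else 0)"

definition maximally_mixed :: "nat \<Rightarrow> complex mat" where
  "maximally_mixed N = (1 / of_nat N) \<cdot>\<^sub>m 1\<^sub>m N"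

lemma proj_ket1_self_adjoint: "self_adjoint 2 proj_ket1"
  unfolding self_adjoint_def by (auto simp: proj_ket1_def intro!: eq_matI)

lemma proj_ket1_idem: "proj_ket1 * proj_ket1 = proj_ket1"
  by (rule eq_matI) (auto simp: proj_ket1_def scalar_prod_def lessThan_nat_numeral atLeast0LessThan)

lemma proj_ket1_eigenvalue_iff: "is_eigenvalue 2 proj_ket1 s \<longleftrightarrow> s = 0 \<or> s = 1"
proof
  assume "is_eigenvalue 2 proj_ket1 s"
  then obtain v where v: "v \<in> carrier_vec 2" "v \<noteq> 0\<^sub>v 2" "proj_ket1 *\<^sub>v v = s \<cdot>\<^sub>v v"
    unfolding is_eigenvalue_def by auto
  have "s * v $ 0 = 0" "s * v $ 1 = v $ 1"
    using arg_cong[OF v(3), of "\<lambda>x. x $ 0"] arg_cong[OF v(3), of "\<lambda>x. x $ 1"] v(1)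
    by (auto simp: proj_ket1_def scalar_prod_def lessThan_nat_numeral atLeast0LessThan)
  moreover have "v $ 0 \<noteq> 0 \<or> v $ 1 \<noteq> 0"
    using v(1,2) by (auto intro!: eq_vecI simp: less_2_cases_iff)
  ultimately show "s = 0 \<or> s = 1"
    by auto
next
  assume "s = 0 \<or> s = 1"
  then show "is_eigenvalue 2 proj_ket1 s"
    unfolding is_eigenvalue_def
    by (intro bexI[of _ "unit_vec 2 (if s = 0 then 0 else 1)"])
      (auto simp: proj_ket1_def scalar_prod_def lessThan_nat_numeral atLeast0LessThan intro!: eq_vecI)
qed

lemma nondegenerate_proj_ket1: "nondegenerate 2 proj_ket1"
  unfolding nondegenerate_def proj_ket1_eigenvalue_iff by (simp add: Collect_disj_eq)

lemma spectral_proj_proj_ket1: "spectral_proj 2 proj_ket1 1 proj_ket1"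
  unfolding spectral_proj_def
  using proj_ket1_eigenvalue_iff proj_ket1_self_adjoint proj_ket1_idem by simp

lemma density_op_maximally_mixed:
  assumes "0 < N"
  shows "density_op N (maximally_mixed N)"
  unfolding density_op_def
proof (intro conjI ballI)
  show "self_adjoint N (maximally_mixed N)"
    unfolding self_adjoint_def by (auto simp: maximally_mixed_def intro!: eq_matI)
  show "mtrace (maximally_mixed N) = 1"
    using assms by (simp add: mtrace_def maximally_mixed_def)
  fix v :: "complex vec"
  assume v: "v \<in> carrier_vec N"
  then have "conjugate v \<bullet> (maximally_mixed N *\<^sub>v v) = (1 / of_nat N) * (conjugate v \<bullet> v)"
    by (simp add: maximally_mixed_def smult_mult_mat_vec[of _ N N])
  then show "Im (conjugate v \<bullet> (maximally_mixed N *\<^sub>v v)) = 0"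
    "0 \<le> Re (conjugate v \<bullet> (maximally_mixed N *\<^sub>v v))"
    using conjugate_sprod_self_nonneg[OF v] by simp_all
qed

lemma mtrace_mult_maximally_mixed:
  "X \<in> carrier_mat N N \<Longrightarrow> mtrace (X * maximally_mixed N) = mtrace X / of_nat N"
  by (simp add: maximally_mixed_def mtrace_def sum_divide_distrib)

lemma perm_idx_inj:
  assumes "0 < n" "\<pi> permutes {..<m}" "a < n ^ m" "b < n ^ m"
    and "perm_idx n m (inv_into UNIV \<pi>) a = perm_idx n m (inv_into UNIV \<pi>) b"
  shows "a = b"
proof -
  have inv: "inv_into UNIV \<pi> \<circ> \<pi> = id"
    using permutes_inv_o(2)[OF assms(2)] .
  have "perm_idx n m \<pi> (perm_idx n m (inv_into UNIV \<pi>) c) = c" if "c < n ^ m" for c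
  proof -
    have "perm_idx n m \<pi> (perm_idx n m (inv_into UNIV \<pi>) c) = perm_idx n m (inv_into UNIV \<pi> \<circ> \<pi>) c"
      by (rule perm_idx_comp[OF assms(1)]) (use permutes_in_image[OF assms(2)] in auto)
    then show ?thesis
      using perm_idx_id[OF assms(1) that] by (simp add: inv)
  qed
  then show ?thesis
    using assms(3-5) by metis
qed

lemma SSC_maximally_mixed: "0 < n \<Longrightarrow> SSC n m (maximally_mixed (n ^ m))"
  unfolding SSC_def
  by (auto intro!: eq_matI simp: perm_conj_def maximally_mixed_def perm_idx_less
      dest: perm_idx_inj)

lemma EC_proj_ket1_maximally_mixed: "EC 2 2 proj_ket1 (maximally_mixed 4)"
proof -
  have half: "mtrace (emb 2 2 k proj_ket1 * maximally_mixed 4) = 1 / 2" if "k < 2" for k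
  proof -
    have "k = 0 \<or> k = 1"
      using that by auto
    then have "mtrace (emb 2 2 k proj_ket1) = 2"
      by (auto simp: mtrace_def emb_def dig_def proj_ket1_def lessThan_nat_numeral)
    moreover have "mtrace (emb 2 2 k proj_ket1 * maximally_mixed 4) = mtrace (emb 2 2 k proj_ket1) / 4"
      using mtrace_mult_maximally_mixed[of _ 4] emb_carrier[of 2 2 k proj_ket1] by simp
    ultimately show ?thesis
      by simp
  qed
  show ?thesis
    unfolding EC_def
  proof (intro allI impI)
    fix k l :: nat
    assume "k < 2" "l < 2"
    then show "mtrace (emb 2 2 k proj_ket1 * maximally_mixed 4) = mtrace (emb 2 2 l proj_ket1 * maximally_mixed 4)"
      using half[of k] half[of l] by (simp only:)
  qed
qed

lemma not_SMC_proj_ket1_maximally_mixed: "\<not> SMC 2 2 proj_ket1 (maximally_mixed 4)"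
proof
  assume "SMC 2 2 proj_ket1 (maximally_mixed 4)"
  then have "mtrace (emb 2 2 0 proj_ket1 * emb 2 2 1 proj_ket1 * maximally_mixed 4) =
      mtrace (emb 2 2 1 proj_ket1 * maximally_mixed 4)"
    unfolding SMC_def using spectral_proj_proj_ket1 by auto
  moreover have "emb 2 2 0 proj_ket1 * emb 2 2 1 proj_ket1 = emb_pair 2 2 0 1 proj_ket1 proj_ket1"
    by (rule emb_mult_emb) (auto simp: proj_ket1_def)
  moreover have "mtrace (emb_pair 2 2 0 1 proj_ket1 proj_ket1 * maximally_mixed 4) = 1 / 4"
  proof -
    have "mtrace (emb_pair 2 2 0 1 proj_ket1 proj_ket1) = 1"
      by (auto simp: mtrace_def emb_pair_def digits_agree_def dig_def proj_ket1_def lessThan_nat_numeral)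
    then show ?thesis
      using mtrace_mult_maximally_mixed[of _ 4] emb_pair_carrier[of 2 2 0 1 proj_ket1 proj_ket1] by simp
  qed
  moreover have "mtrace (emb 2 2 1 proj_ket1 * maximally_mixed 4) = 1 / 2"
  proof -
    have "mtrace (emb 2 2 1 proj_ket1) = 2"
      by (auto simp: mtrace_def emb_def dig_def proj_ket1_def lessThan_nat_numeral)
    then show ?thesis
      using mtrace_mult_maximally_mixed[OF emb_carrier[of 2 2 1 proj_ket1]] by simp
  qed
  ultimately have "(1 / 4 :: complex) = 1 / 2"
    by (simp only:)
  then show False
    by simp
qed

lemma setting_proj_ket1_maximally_mixed: "setting 2 2 proj_ket1 (maximally_mixed 4)"
  unfolding setting_def using proj_ket1_self_adjoint density_op_maximally_mixed[of "2 ^ 2"] by simp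

theorem proposition5:
  shows "((\<forall>n m \<sigma> \<rho>. setting n m \<sigma> \<rho> \<longrightarrow> SMC n m \<sigma> \<rho> \<longrightarrow> EC n m \<sigma> \<rho>) \<and>
          (\<exists>n m \<sigma> \<rho>. setting n m \<sigma> \<rho> \<and> EC n m \<sigma> \<rho> \<and> \<not> SMC n m \<sigma> \<rho>))
       \<and> ((\<forall>n m \<sigma> \<rho>. setting n m \<sigma> \<rho> \<longrightarrow> nondegenerate n \<sigma> \<longrightarrow> SMC n m \<sigma> \<rho> \<longrightarrow> RSC n m \<rho>) \<and>
          (\<exists>n m \<sigma> \<rho>. setting n m \<sigma> \<rho> \<and> nondegenerate n \<sigma> \<and> RSC n m \<rho> \<and> \<not> SMC n m \<sigma> \<rho>))
       \<and> ((\<forall>n m \<sigma> \<rho>. setting n m \<sigma> \<rho> \<longrightarrow> nondegenerate n \<sigma> \<longrightarrow> SMC n m \<sigma> \<rho> \<longrightarrow> SSC n m \<rho>) \<and>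
          (\<exists>n m \<sigma> \<rho>. setting n m \<sigma> \<rho> \<and> nondegenerate n \<sigma> \<and> SSC n m \<rho> \<and> \<not> SMC n m \<sigma> \<rho>))"
proof -
  have setting: "0 < n" "self_adjoint n \<sigma>" "self_adjoint (n ^ m) \<rho>" "psd (n ^ m) \<rho>"
    if "setting n m \<sigma> \<rho>" for n m \<sigma> \<rho>
    using that density_op_psd by (auto simp: setting_def density_op_def)
  have SMC_EC: "setting n m \<sigma> \<rho> \<Longrightarrow> SMC n m \<sigma> \<rho> \<Longrightarrow> EC n m \<sigma> \<rho>" for n m \<sigma> \<rho>
    using SMC_imp_EC setting by (metis self_adjoint_def)
  have SMC_SSC: "setting n m \<sigma> \<rho> \<Longrightarrow> nondegenerate n \<sigma> \<Longrightarrow> SMC n m \<sigma> \<rho> \<Longrightarrow> SSC n m \<rho>"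
    for n m \<sigma> \<rho>
    using SMC_imp_SSC setting by metis
  have SSC_RSC: "setting n m \<sigma> \<rho> \<Longrightarrow> SSC n m \<rho> \<Longrightarrow> RSC n m \<rho>" for n m \<sigma> \<rho>
    using SSC_imp_RSC setting by metis
  have example: "setting 2 2 proj_ket1 (maximally_mixed 4)" "nondegenerate 2 proj_ket1"
    "EC 2 2 proj_ket1 (maximally_mixed 4)" "SSC 2 2 (maximally_mixed 4)"
    "\<not> SMC 2 2 proj_ket1 (maximally_mixed 4)"
    using setting_proj_ket1_maximally_mixed nondegenerate_proj_ket1 EC_proj_ket1_maximally_mixed
      SSC_maximally_mixed[of 2 2] not_SMC_proj_ket1_maximally_mixed by simp_all
  show ?thesis
    using SMC_EC SMC_SSC SSC_RSC example by meson
qed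

end
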